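(* Let $d\ge1$. Every partition $\pi\in\mathrm{NC}_d(\mathbf S)$ has exactly $\mathrm{rk}(\pi)+1$ complementary regions. Consequently, the maximal elements of $\mathrm{NC}_d(\mathbf S)$ are exactly those with $d$ complementary regions.
   Context: $\mathbf S\subset\mathbb C$ is the unit circle, regarded as the boundary of the closed unit disk. A partition of $\mathbf S$ is noncrossing if the convex hulls of its blocks are pairwise disjoint, and is a degree-$d$ partition if $z^d=w^d$ whenever $z,w$ lie in the same block. $\mathrm{NC}_d(\mathbf S)$ is the poset of noncrossing degree-$d$ partitions of $\mathbf S$ ordered by refinement (finer below coarser). If $\pi$ has non-singleton blocks $A_1,\dots,A_k$, its total criticality (rank) is $\mathrm{rk}(\pi)=|A_1|+\cdots+|A_k|-k$. The complementary regions of $\pi$ are the connected components of the closed disk minus the union of the convex hulls of the blocks of $\pi$. *)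

theory Defs
  imports "HOL-Analysis.Analysis" "HOL-Library.Disjoint_Sets"
begin

definition unit_circle :: "complex set" where
  "unit_circle = sphere 0 1"

definition noncrossing :: "complex set set \<Rightarrow> bool" where
  "noncrossing P \<longleftrightarrow>
     (\<forall>A\<in>P. \<forall>B\<in>P. A \<noteq> B \<longrightarrow> convex hull A \<inter> convex hull B = {})"

definition degree_partition :: "nat \<Rightarrow> complex set set \<Rightarrow> bool" where
  "degree_partition d P \<longleftrightarrow> (\<forall>A\<in>P. \<forall>z\<in>A. \<forall>w\<in>A. z ^ d = w ^ d)"

definition NC :: "nat \<Rightarrow> complex set set set" where
  "NC d = {P. partition_on unit_circle P \<and> noncrossing P \<and> degree_partition d P}"

definition refines :: "complex set set \<Rightarrow> complex set set \<Rightarrow> bool" where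
  "refines P Q \<longleftrightarrow> (\<forall>A\<in>P. \<exists>B\<in>Q. A \<subseteq> B)"

definition maximal_NC :: "nat \<Rightarrow> complex set set \<Rightarrow> bool" where
  "maximal_NC d P \<longleftrightarrow> P \<in> NC d \<and> (\<forall>Q\<in>NC d. refines P Q \<longrightarrow> Q = P)"

definition nonsingleton_blocks :: "complex set set \<Rightarrow> complex set set" where
  "nonsingleton_blocks P = {A\<in>P. \<not> is_singleton A}"

definition rk :: "complex set set \<Rightarrow> nat" where
  "rk P = (\<Sum>A\<in>nonsingleton_blocks P. card A - 1)"

definition regions :: "complex set set \<Rightarrow> complex set set" where
  "regions P = components (cball 0 1 - (\<Union>A\<in>P. convex hull A))"

end

theory Submission
  imports Defs
begin

text \<open>A block \<open>A\<close> with at least two points splits the closed disk into its convex hull and one open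
  cap beyond each edge of the inscribed polygon. For finitely many blocks with disjoint hulls, the
  complementary regions are therefore the nonempty \<^emph>\<open>cells\<close>: intersections of the open disk with
  one cap of every block. Adding a block \<open>A\<close> splits the one cell containing its hull into \<open>|A|\<close>
  cells and leaves every other cell inside a single cap of \<open>A\<close>; by induction there are \<open>rk + 1\<close> cells.
  For degree-\<open>d\<close> blocks, each cell has a point of every generic fiber \<open>{z. z^d = w^d}\<close> on all
  its boundary arcs (a counting argument on the laminar family of these arcs), so there are at most
  \<open>d\<close> cells; this also bounds the number of nonsingleton blocks. With fewer than \<open>d\<close> cells, two
  fiber points share a cell and can be joined into a new block, while a strict coarsening increases
  \<open>rk\<close> and hence the number of regions.\<close>

section \<open>Counterclockwise angles on the unit circle\<close>

definition ccw_angle :: "complex \<Rightarrow> complex \<Rightarrow> real" where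
  "ccw_angle a q = Arg2pi (q / a)"

lemma ccw_angle_nonneg: "0 \<le> ccw_angle a q" and ccw_angle_less_2pi: "ccw_angle a q < 2*pi"
  using Arg2pi[of "q/a"] by (auto simp: ccw_angle_def)

lemma ccw_angle_cis:
  assumes "norm a = 1" "norm q = 1"
  shows "q = a * cis (ccw_angle a q)"
proof -
  have "q / a = complex_of_real (cmod (q/a)) * exp (\<i> * complex_of_real (ccw_angle a q))"
    using Arg2pi[of "q/a"] unfolding ccw_angle_def is_Arg_def by blast
  also have "cmod (q/a) = 1" using assms by (simp add: norm_divide)
  finally have "q / a = cis (ccw_angle a q)" by (simp add: cis_conv_exp)
  moreover have "a \<noteq> 0" using assms by auto
  ultimately show ?thesis by (simp add: field_simps)
qed

lemma ccw_angle_eqI: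
  assumes "norm a = 1" "q = a * cis t" "0 \<le> t" "t < 2*pi"
  shows "ccw_angle a q = t"
proof -
  have "q / a = complex_of_real 1 * exp (\<i> * complex_of_real t)"
    using assms by (auto simp: cis_conv_exp)
  then show ?thesis unfolding ccw_angle_def using assms by (intro Arg2pi_unique) auto
qed

lemma ccw_angle_self: "norm a = 1 \<Longrightarrow> ccw_angle a a = 0"
  by (rule ccw_angle_eqI) auto

lemma ccw_angle_eq_0_iff:
  assumes "norm a = 1" "norm q = 1"
  shows "ccw_angle a q = 0 \<longleftrightarrow> q = a"
  using ccw_angle_cis[OF assms] ccw_angle_self[OF assms(1)] by auto

lemma ccw_angle_pos: "norm a = 1 \<Longrightarrow> norm q = 1 \<Longrightarrow> q \<noteq> a \<Longrightarrow> 0 < ccw_angle a q"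
  using ccw_angle_nonneg[of a q] ccw_angle_eq_0_iff[of a q] by auto

lemma ccw_angle_add:
  assumes "norm a = 1" "norm b = 1" "norm q = 1"
  shows "ccw_angle a q = ccw_angle a b + ccw_angle b q
    \<or> ccw_angle a q = ccw_angle a b + ccw_angle b q - 2*pi"
proof -
  have q: "q = a * cis (ccw_angle a b + ccw_angle b q)"
    using ccw_angle_cis[OF assms(1,2)] ccw_angle_cis[OF assms(2,3)] by (metis cis_mult mult.assoc)
  have "cis (x - 2*pi) = cis x" for x
    by (simp add: complex_eq_iff cos_diff sin_diff)
  with q show ?thesis
    using ccw_angle_nonneg[of a b] ccw_angle_nonneg[of b q] ccw_angle_less_2pi[of a b]
      ccw_angle_less_2pi[of b q]
    by (cases "ccw_angle a b + ccw_angle b q < 2*pi") (auto intro!: ccw_angle_eqI assms)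
qed

lemma ccw_angle_swap:
  assumes "norm a = 1" "norm q = 1" "a \<noteq> q"
  shows "ccw_angle a q + ccw_angle q a = 2*pi"
  using ccw_angle_add[OF assms(1,2,1)] ccw_angle_self[OF assms(1)] ccw_angle_pos[OF assms(1,2)]
    ccw_angle_nonneg[of q a] assms(3) by auto

section \<open>Fibers of the power map\<close>

definition power_fiber :: "nat \<Rightarrow> complex \<Rightarrow> complex set" where
  "power_fiber d w = {z. z ^ d = w ^ d}"

lemma norm_power_fiber:
  assumes "z \<in> power_fiber d w" "norm w = 1" "d \<ge> 1"
  shows "norm z = 1"
proof -
  from assms(1) have "norm (z ^ d) = norm (w ^ d)" by (simp add: power_fiber_def)
  then have "norm z ^ d = 1" using assms(2) by (simp add: norm_power)
  then show ?thesis using power_eq_1_iff[of "norm z" d] assms(3) by auto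
qed

lemma card_power_fiber: "norm w = 1 \<Longrightarrow> d \<ge> 1 \<Longrightarrow> card (power_fiber d w) = d"
  unfolding power_fiber_def by (rule card_nth_roots) auto

lemma finite_power_fiber: "d \<ge> 1 \<Longrightarrow> finite (power_fiber d w)"
  unfolding power_fiber_def by (rule finite_nth_roots) simp

lemma mult_cis_in_power_fiber_iff:
  assumes a: "a \<noteq> 0" and w: "w ^ d = (a * cis t) ^ d" and d: "d \<ge> 1"
  shows "a * cis x \<in> power_fiber d w \<longleftrightarrow> (\<exists>n::int. x = t + n * (2*pi / real d))"
proof -
  have "a * cis x \<in> power_fiber d w \<longleftrightarrow> a ^ d * cis (real d * x) = a ^ d * cis (real d * t)"
    using w by (simp add: power_fiber_def power_mult_distrib Complex.DeMoivre)
  also have "\<dots> \<longleftrightarrow> cis (real d * x) = cis (real d * t)"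
    using a by auto
  also have "\<dots> \<longleftrightarrow> (\<exists>n::int. real d * x = real d * t + 2 * pi * n)"
    using sin_cos_eq_iff[of "real d * x" "real d * t"] by (auto simp: complex_eq_iff)
  also have "\<dots> \<longleftrightarrow> (\<exists>n::int. x = t + n * (2*pi / real d))"
    using d by (simp add: field_simps)
  finally show ?thesis .
qed

lemma power_fiber_angle_offset:
  assumes a: "norm a = 1" and w: "norm w = 1" and d: "d \<ge> 1"
  defines "s \<equiv> 2*pi / real d"
  obtains \<rho> where "0 \<le> \<rho>" "\<rho> < s" "\<And>x. a * cis x \<in> power_fiber d w \<longleftrightarrow> (\<exists>n::int. x = \<rho> + n * s)"
proof -
  have s0: "s > 0" using d by (simp add: s_def)
  have a0: "a \<noteq> 0" using a by auto
  define t where "t = ccw_angle a w"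
  define \<rho> where "\<rho> = t - \<lfloor>t / s\<rfloor> * s"
  have \<rho>: "0 \<le> \<rho>" "\<rho> < s"
    unfolding \<rho>_def using floor_divide_lower[OF s0, of t] floor_divide_upper[OF s0, of t]
    by (auto simp: algebra_simps)
  have "w ^ d = (a * cis t) ^ d" unfolding t_def using ccw_angle_cis[OF a w] by simp
  moreover have "\<rho> = t + of_int (- \<lfloor>t / s\<rfloor>) * (2*pi / real d)" by (simp add: \<rho>_def s_def)
  ultimately have "a * cis \<rho> \<in> power_fiber d w" using mult_cis_in_power_fiber_iff[OF a0 _ d] by blast
  then have "w ^ d = (a * cis \<rho>) ^ d" by (simp add: power_fiber_def)
  then show ?thesis
    using that[OF \<rho>] mult_cis_in_power_fiber_iff[OF a0 _ d] unfolding s_def by blast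
qed

lemma power_fiber_angles:
  assumes a: "norm a = 1" and w: "norm w = 1" and d: "d \<ge> 1"
  defines "s \<equiv> 2*pi / real d"
  obtains \<rho> where "0 \<le> \<rho>" "\<rho> < s" "\<rho> = 0 \<longleftrightarrow> a ^ d = w ^ d"
    "bij_betw (ccw_angle a) (power_fiber d w) ((\<lambda>j. \<rho> + real j * s) ` {..<d})"
proof -
  have s0: "s > 0" and ds: "real d * s = 2*pi" using d by (simp_all add: s_def)
  obtain \<rho> where \<rho>: "0 \<le> \<rho>" "\<rho> < s"
    and in_fiber_iff: "\<And>x. a * cis x \<in> power_fiber d w \<longleftrightarrow> (\<exists>n::int. x = \<rho> + n * s)"
    using power_fiber_angle_offset[OF a w d] unfolding s_def by blast
  have angle_in_range: "\<rho> + real j * s < 2*pi" if "j < d" for j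
  proof -
    have "(real j + 1) * s \<le> real d * s" using that s0 by (intro mult_right_mono) auto
    then show ?thesis using \<rho> ds by (simp add: algebra_simps)
  qed
  have "bij_betw (ccw_angle a) (power_fiber d w) ((\<lambda>j. \<rho> + real j * s) ` {..<d})"
  proof (rule bij_betw_imageI)
    show "inj_on (ccw_angle a) (power_fiber d w)"
      using ccw_angle_cis[OF a] norm_power_fiber[OF _ w d] by (metis inj_onI)
    show "ccw_angle a ` power_fiber d w = (\<lambda>j. \<rho> + real j * s) ` {..<d}"
    proof (intro set_eqI iffI)
      fix x assume "x \<in> ccw_angle a ` power_fiber d w"
      then obtain z where z: "z \<in> power_fiber d w" "x = ccw_angle a z" by auto
      then have "a * cis x \<in> power_fiber d w"
        using ccw_angle_cis[OF a norm_power_fiber[OF _ w d]] by auto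
      then obtain n :: int where n: "x = \<rho> + n * s" using in_fiber_iff by blast
      have "(- 1) * s < n * s" "n * s < real d * s"
        using n z(2) \<rho> ds ccw_angle_nonneg[of a z] ccw_angle_less_2pi[of a z] by linarith+
      then have "- 1 < n" "n < int d" using s0 by (simp_all only: mult_less_cancel_right_pos)
      then show "x \<in> (\<lambda>j. \<rho> + real j * s) ` {..<d}"
        using n by (intro image_eqI[of _ _ "nat n"]) auto
    next
      fix x assume "x \<in> (\<lambda>j. \<rho> + real j * s) ` {..<d}"
      then obtain j where j: "j < d" "x = \<rho> + real j * s" by auto
      then have "a * cis x \<in> power_fiber d w" using in_fiber_iff[of x] by (metis of_int_of_nat_eq)
      moreover have "ccw_angle a (a * cis x) = x"
        using j \<rho> s0 angle_in_range by (intro ccw_angle_eqI[OF a]) auto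
      ultimately show "x \<in> ccw_angle a ` power_fiber d w" by (metis image_eqI)
    qed
  qed
  moreover have "a ^ d = w ^ d \<longleftrightarrow> (\<exists>n::int. 0 = \<rho> + n * s)"
    using in_fiber_iff[of 0] by (simp add: power_fiber_def)
  moreover have "(\<exists>n::int. 0 = \<rho> + n * s) \<longleftrightarrow> \<rho> = 0"
  proof
    assume "\<exists>n::int. 0 = \<rho> + n * s"
    then obtain n :: int where "0 = \<rho> + n * s" by blast
    then have n: "\<rho> = (- n) * s" by (simp add: algebra_simps)
    then have "0 * s \<le> (- n) * s" "(- n) * s < 1 * s" using \<rho> by auto
    then have "0 \<le> - n" "- n < 1" using s0 by (simp_all only: mult_le_cancel_right_pos mult_less_cancel_right_pos)
    then show "\<rho> = 0" using n by simp
  qed (auto intro: exI[of _ 0])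
  ultimately show ?thesis using that \<rho> by blast
qed

lemma card_power_fiber_open_arc:
  assumes a: "norm a = 1" and w: "norm w = 1" and d: "d \<ge> 1" and k: "1 \<le> k" "k \<le> d"
  defines "s \<equiv> 2*pi / real d"
  shows "card (power_fiber d w \<inter> {z. 0 < ccw_angle a z \<and> ccw_angle a z < real k * s})
    = (if a ^ d = w ^ d then k - 1 else k)"
proof -
  have s0: "s > 0" using d by (simp add: s_def)
  obtain \<rho> where \<rho>: "0 \<le> \<rho>" "\<rho> < s" "\<rho> = 0 \<longleftrightarrow> a ^ d = w ^ d"
    and bij: "bij_betw (ccw_angle a) (power_fiber d w) ((\<lambda>j. \<rho> + real j * s) ` {..<d})"
    using power_fiber_angles[OF a w d] unfolding s_def by blast
  define P where "P x \<longleftrightarrow> 0 < x \<and> x < real k * s" for x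
  have "card (power_fiber d w \<inter> {z. P (ccw_angle a z)})
      = card (ccw_angle a ` (power_fiber d w \<inter> {z. P (ccw_angle a z)}))"
    using bij unfolding bij_betw_def by (metis card_image inj_on_Int)
  also have "ccw_angle a ` (power_fiber d w \<inter> {z. P (ccw_angle a z)})
      = ccw_angle a ` power_fiber d w \<inter> Collect P"
    by auto
  also have "\<dots> = (\<lambda>j. \<rho> + real j * s) ` {j. j < d \<and> P (\<rho> + real j * s)}"
    unfolding bij_betw_imp_surj_on[OF bij] by auto
  also have "card \<dots> = card {j. j < d \<and> P (\<rho> + real j * s)}"
    using s0 by (intro card_image inj_onI) auto
  also have "{j. j < d \<and> P (\<rho> + real j * s)} = (if \<rho> = 0 then {1..<k} else {..<k})"
  proof (cases "\<rho> = 0")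
    case True
    then show ?thesis using s0 k by (auto simp: P_def zero_less_mult_iff)
  next
    case False
    have "\<rho> + real j * s < real k * s \<longleftrightarrow> j < k" for j
    proof
      assume "\<rho> + real j * s < real k * s"
      then have "real j * s < real k * s" using \<rho>(1) by linarith
      then show "j < k" using s0 by (simp add: mult_less_cancel_right)
    next
      assume "j < k"
      then have "(real j + 1) * s \<le> real k * s" using s0 by (intro mult_right_mono) auto
      then show "\<rho> + real j * s < real k * s" using \<rho>(2) by (simp add: algebra_simps)
    qed
    moreover have "0 < \<rho> + real j * s" for j using False \<rho>(1) s0 by (intro add_pos_nonneg) auto
    ultimately have "{j. j < d \<and> P (\<rho> + real j * s)} = {..<k}" using k(2) by (auto simp: P_def)
    then show ?thesis using False by simp
  qed
  finally show ?thesis using \<rho>(3) by (simp add: P_def)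
qed

lemma ccw_angle_power_fiber_self:
  assumes a: "norm a = 1" and d: "d \<ge> 1" and z: "z \<in> power_fiber d a"
  obtains j where "j < d" "ccw_angle a z = real j * (2*pi / real d)"
proof -
  obtain \<rho> where "\<rho> = 0 \<longleftrightarrow> a ^ d = a ^ d"
    and bij: "bij_betw (ccw_angle a) (power_fiber d a) ((\<lambda>j. \<rho> + real j * (2*pi / real d)) ` {..<d})"
    using power_fiber_angles[OF a a d] by blast
  then show ?thesis using bij_betw_imp_surj_on[OF bij] z that by auto
qed

section \<open>Caps cut off by the edges of an inscribed polygon\<close>

definition circle_block :: "complex set \<Rightarrow> bool" where
  "circle_block A \<longleftrightarrow> finite A \<and> (\<forall>a\<in>A. norm a = 1) \<and> 2 \<le> card A"

definition gap :: "complex set \<Rightarrow> complex \<Rightarrow> real" where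
  "gap A a = Min (ccw_angle a ` (A - {a}))"

text \<open>The open half-plane beyond the chord from \<open>a\<close> to its counterclockwise successor
  \<open>a * cis (gap A a)\<close> in \<open>A\<close>: the chord lies on the line with unit normal \<open>a * cis (gap A a / 2)\<close>
  at distance \<open>cos (gap A a / 2)\<close> from the origin.\<close>

definition cap :: "complex set \<Rightarrow> complex \<Rightarrow> complex set" where
  "cap A a = {y. cos (gap A a / 2) < (a * cis (gap A a / 2)) \<bullet> y}"

lemma circle_block_norm: "circle_block A \<Longrightarrow> a \<in> A \<Longrightarrow> norm a = 1"
  by (auto simp: circle_block_def)

lemma circle_block_nonempty: "circle_block A \<Longrightarrow> A \<noteq> {}"
  by (auto simp: circle_block_def)

lemma convex_hull_circle_block_subset_cball: "circle_block A \<Longrightarrow> convex hull A \<subseteq> cball 0 1"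
  by (intro hull_minimal) (auto simp: circle_block_def convex_cball)

lemma
  assumes "circle_block A" "a \<in> A"
  shows gap_pos: "0 < gap A a" and gap_less_2pi: "gap A a < 2*pi"
    and gap_attained: "\<exists>b\<in>A. b \<noteq> a \<and> ccw_angle a b = gap A a"
    and gap_le: "\<And>b. b \<in> A \<Longrightarrow> b \<noteq> a \<Longrightarrow> gap A a \<le> ccw_angle a b"
proof -
  have fin: "finite (A - {a})" using assms by (auto simp: circle_block_def)
  have "A - {a} \<noteq> {}"
  proof
    assume "A - {a} = {}"
    then have "card A \<le> card {a}" by (intro card_mono) auto
    then show False using assms by (simp add: circle_block_def)
  qed
  then have "gap A a \<in> ccw_angle a ` (A - {a})" unfolding gap_def using fin by (intro Min_in) auto
  then obtain b where b: "b \<in> A" "b \<noteq> a" "gap A a = ccw_angle a b" by auto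
  then show "\<exists>b\<in>A. b \<noteq> a \<and> ccw_angle a b = gap A a" by auto
  show "0 < gap A a" using b ccw_angle_pos assms by (auto simp: circle_block_def)
  show "gap A a < 2*pi" using b ccw_angle_less_2pi by auto
  show "\<And>b. b \<in> A \<Longrightarrow> b \<noteq> a \<Longrightarrow> gap A a \<le> ccw_angle a b"
    unfolding gap_def using fin by (intro Min_le) auto
qed

lemma successor_in_block:
  assumes "circle_block A" "a \<in> A"
  obtains b where "b \<in> A" "b \<noteq> a" "b = a * cis (gap A a)"
  using gap_attained[OF assms] ccw_angle_cis circle_block_norm[OF assms(1)] assms(2) by metis

lemma inner_mult_cis:
  assumes "norm a = 1"
  shows "(a * cis u) \<bullet> (a * cis t) = cos (t - u)"
proof -
  have "(a * cis u) \<bullet> (a * cis t) = Re (cnj (a * cis u) * (a * cis t))"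
    by (simp add: inner_complex_def algebra_simps)
  also have "cnj (a * cis u) * (a * cis t) = (cnj a * a) * cis (t - u)"
    by (simp add: cis_cnj cis_mult algebra_simps)
  also have "cnj a * a = 1" using assms complex_norm_square[of a] by (simp add: mult.commute)
  finally show ?thesis by simp
qed

lemma in_halfplane_iff_ccw_angle:
  assumes "norm a = 1" "norm q = 1" "0 < g" "g < 2*pi"
  shows "cos (g/2) < (a * cis (g/2)) \<bullet> q \<longleftrightarrow> 0 < ccw_angle a q \<and> ccw_angle a q < g"
proof -
  define t where "t = ccw_angle a q"
  have t: "0 \<le> t" "t < 2*pi" unfolding t_def using ccw_angle_nonneg ccw_angle_less_2pi by auto
  have "(a * cis (g/2)) \<bullet> q = cos (t - g/2)"
    using ccw_angle_cis[OF assms(1,2)] inner_mult_cis[OF assms(1)] unfolding t_def by metis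
  also have "cos (t - g/2) = cos (g/2) + 2 * (sin (t/2) * sin ((g - t)/2))"
  proof -
    have "((t - g/2) + g/2) / 2 = t/2" "(g/2 - (t - g/2)) / 2 = (g - t)/2" by simp_all
    then show ?thesis using cos_diff_cos[of "t - g/2" "g/2"] by simp
  qed
  finally have eq: "(a * cis (g/2)) \<bullet> q = cos (g/2) + 2 * (sin (t/2) * sin ((g - t)/2))" .
  have "0 < sin (t/2) * sin ((g - t)/2) \<longleftrightarrow> 0 < t \<and> t < g"
  proof (cases "t = 0")
    case False
    then have "0 < sin (t/2)" using t by (intro sin_gt_zero) auto
    moreover have "0 < sin ((g - t)/2) \<longleftrightarrow> t < g"
    proof
      assume "t < g"
      then show "0 < sin ((g - t)/2)" using assms t by (intro sin_gt_zero) auto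
    next
      assume pos: "0 < sin ((g - t)/2)"
      show "t < g"
      proof (rule ccontr)
        assume "\<not> t < g"
        then have "0 \<le> sin ((t - g)/2)" using t assms by (intro sin_ge_zero) auto
        then show False using pos sin_minus[of "(t - g)/2"] by (simp add: minus_divide_left)
      qed
    qed
    ultimately show ?thesis using False t by (simp add: zero_less_mult_iff)
  qed simp
  then show ?thesis using eq unfolding t_def by linarith
qed

lemma mem_cap_iff:
  assumes "circle_block A" "a \<in> A" "norm q = 1"
  shows "q \<in> cap A a \<longleftrightarrow> 0 < ccw_angle a q \<and> ccw_angle a q < gap A a"
  using in_halfplane_iff_ccw_angle[of a q "gap A a"] gap_pos[OF assms(1,2)] gap_less_2pi[OF assms(1,2)]
    circle_block_norm[OF assms(1,2)] assms(3)
  by (simp add: cap_def)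

lemma open_cap: "open (cap A a)"
  by (simp add: cap_def open_halfspace_gt)

lemma convex_cap: "convex (cap A a)"
  by (simp add: cap_def convex_halfspace_gt)

lemma vertex_notin_cap:
  assumes "circle_block A" "a \<in> A" "b \<in> A"
  shows "b \<notin> cap A a"
proof
  assume "b \<in> cap A a"
  then have "0 < ccw_angle a b" "ccw_angle a b < gap A a"
    using mem_cap_iff assms circle_block_norm by auto
  moreover have "b \<noteq> a" using calculation ccw_angle_self circle_block_norm assms by auto
  ultimately show False using gap_le[OF assms(1,2,3)] by simp
qed

lemma convex_hull_cap_disjoint:
  assumes "circle_block A" "a \<in> A"
  shows "convex hull A \<inter> cap A a = {}"
proof -
  have "convex hull A \<subseteq> {y. (a * cis (gap A a / 2)) \<bullet> y \<le> cos (gap A a / 2)}"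
    using vertex_notin_cap[OF assms]
    by (intro hull_minimal) (auto simp: cap_def convex_halfspace_le not_less)
  then show ?thesis by (auto simp: cap_def)
qed

lemma caps_disjoint_on_circle:
  assumes "circle_block A" "a \<in> A" "a' \<in> A" "a \<noteq> a'" "norm q = 1"
  shows "q \<notin> cap A a \<inter> cap A a'"
proof
  assume q: "q \<in> cap A a \<inter> cap A a'"
  have n: "norm a = 1" "norm a' = 1" using assms circle_block_norm by auto
  have "0 < ccw_angle a q" "ccw_angle a q < gap A a" "ccw_angle a' q < gap A a'"
    using mem_cap_iff assms q by auto
  moreover have "gap A a \<le> ccw_angle a a'" "gap A a' \<le> ccw_angle a' a"
    using gap_le assms by auto
  moreover have "ccw_angle a a' + ccw_angle a' a = 2*pi" using ccw_angle_swap n assms by auto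
  ultimately show False
    using ccw_angle_add[OF n assms(5)] ccw_angle_nonneg[of a' q] by linarith
qed

lemma ray_meets_circle:
  fixes y t :: complex
  assumes "norm y \<le> 1" "t \<noteq> 0"
  obtains l where "l \<ge> 0" "norm (y + of_real l * t) = 1"
proof -
  define b where "b = (1 + norm y) / norm t"
  have b0: "0 \<le> b" unfolding b_def by simp
  have "norm (of_real b * t) - norm y \<le> norm (y + of_real b * t)"
    by (metis norm_diff_ineq add.commute)
  moreover have "norm (of_real b * t) = b * norm t" using b0 by (simp add: norm_mult)
  moreover have "b * norm t = 1 + norm y" using assms unfolding b_def by simp
  ultimately have "1 \<le> norm (y + of_real b * t)" by simp
  moreover have "continuous_on {0..b} (\<lambda>l. norm (y + of_real l * t))"
    by (intro continuous_intros)
  ultimately obtain l where "0 \<le> l" "l \<le> b" "norm (y + of_real l * t) = 1"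
    using IVT'[of "\<lambda>l. norm (y + of_real l * t)" 0 1 b] assms b0 by auto
  then show ?thesis using that by blast
qed

text \<open>Moving along \<open>v1 + v2\<close> (or, if these cancel, along a common normal direction) increases both
  linear forms, so the circle is reached without leaving either half-plane.\<close>

lemma halfplanes_meet_on_circle:
  fixes v1 v2 y :: complex
  assumes "norm v1 = 1" "norm v2 = 1" "norm y \<le> 1" "c1 < v1 \<bullet> y" "c2 < v2 \<bullet> y"
  obtains q where "norm q = 1" "c1 < v1 \<bullet> q" "c2 < v2 \<bullet> q"
proof -
  obtain t where t: "t \<noteq> 0" "0 \<le> v1 \<bullet> t" "0 \<le> v2 \<bullet> t"
  proof (cases "v1 + v2 = 0")
    case True
    then have "v2 = - v1" by algebra
    moreover have "v1 \<bullet> (\<i> * v1) = 0" by (simp add: inner_complex_def algebra_simps)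
    moreover have "\<i> * v1 \<noteq> 0" using assms by auto
    ultimately show ?thesis using that[of "\<i> * v1"] by auto
  next
    case False
    have "\<bar>v1 \<bullet> v2\<bar> \<le> 1" using Cauchy_Schwarz_ineq2[of v1 v2] assms by simp
    moreover have "v1 \<bullet> v1 = 1" "v2 \<bullet> v2 = 1"
      using assms(1,2) by (simp_all add: power2_norm_eq_inner[symmetric])
    ultimately show ?thesis
      using that[of "v1 + v2"] False by (simp add: inner_add_right inner_commute)
  qed
  obtain l where l: "l \<ge> 0" "norm (y + of_real l * t) = 1" using ray_meets_circle assms t by blast
  have "v \<bullet> (y + of_real l * t) = v \<bullet> y + l * (v \<bullet> t)" for v
    by (simp add: inner_add_right scaleR_conv_of_real[symmetric])
  moreover have "l * (v1 \<bullet> t) \<ge> 0" "l * (v2 \<bullet> t) \<ge> 0" using l t by auto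
  ultimately show ?thesis using that[OF l(2)] assms by fastforce
qed

lemma caps_disjoint:
  assumes "circle_block A" "a \<in> A" "a' \<in> A" "a \<noteq> a'" "norm y \<le> 1"
  shows "y \<notin> cap A a \<inter> cap A a'"
proof
  assume "y \<in> cap A a \<inter> cap A a'"
  then have "cos (gap A a / 2) < (a * cis (gap A a / 2)) \<bullet> y"
    "cos (gap A a' / 2) < (a' * cis (gap A a' / 2)) \<bullet> y" by (auto simp: cap_def)
  moreover have "norm (a * cis (gap A a / 2)) = 1" "norm (a' * cis (gap A a' / 2)) = 1"
    using assms circle_block_norm by (auto simp: norm_mult)
  ultimately obtain q where "norm q = 1" "q \<in> cap A a \<inter> cap A a'"
    using halfplanes_meet_on_circle[OF _ _ assms(5)] unfolding cap_def by blast
  then show False using caps_disjoint_on_circle assms by blast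
qed

lemma circle_in_caps:
  assumes "circle_block A" "norm q = 1" "q \<notin> A"
  obtains a where "a \<in> A" "q \<in> cap A a"
proof -
  have fin: "finite A" and ne: "A \<noteq> {}" using assms by (auto simp: circle_block_def)
  have "Min ((\<lambda>b. ccw_angle b q) ` A) \<in> (\<lambda>b. ccw_angle b q) ` A"
    using fin ne by (intro Min_in) auto
  then obtain a where a: "a \<in> A" "Min ((\<lambda>b. ccw_angle b q) ` A) = ccw_angle a q" by auto
  have least: "ccw_angle a q \<le> ccw_angle b q" if "b \<in> A" for b
    using a fin that by (metis Min_le finite_imageI image_eqI)
  have na: "norm a = 1" using circle_block_norm assms a by auto
  have "ccw_angle a q < gap A a"
  proof (rule ccontr)
    assume "\<not> ccw_angle a q < gap A a"
    moreover obtain b where b: "b \<in> A" "b \<noteq> a" "ccw_angle a b = gap A a"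
      using gap_attained[OF assms(1) a(1)] by auto
    moreover have "norm b = 1" using circle_block_norm assms b by auto
    ultimately show False
      using ccw_angle_add[OF na _ assms(2), of b] least[of b] gap_pos[OF assms(1) a(1)]
        ccw_angle_less_2pi[of b q] by linarith
  qed
  moreover have "0 < ccw_angle a q" using ccw_angle_pos na assms a by auto
  ultimately show ?thesis using that a mem_cap_iff assms by blast
qed

lemma chord_line_in_segment:
  fixes a y :: complex
  assumes "norm a = 1" "0 < g" "g < 2*pi" "norm y \<le> 1" "(a * cis (g/2)) \<bullet> y = cos (g/2)"
  shows "y \<in> closed_segment a (a * cis g)"
proof -
  define v where "v = a * cis (g/2)"
  define S where "S = sin (g/2)"
  have S0: "S > 0" unfolding S_def using assms by (intro sin_gt_zero) auto
  have "cnj v * v = 1" using assms complex_norm_square[of v] by (simp add: v_def norm_mult mult.commute)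
  define y' where "y' = cnj v * y"
  have yy: "y = v * y'" unfolding y'_def using \<open>cnj v * v = 1\<close> by (metis mult.assoc mult.commute mult_1)
  have Re: "Re y' = cos (g/2)"
    using assms(5) unfolding y'_def v_def by (simp add: inner_complex_def algebra_simps)
  have "norm y' \<le> 1" using assms unfolding y'_def v_def by (simp add: norm_mult)
  then have "(norm y')\<^sup>2 \<le> 1" by (simp add: power_le_one)
  then have "(Re y')\<^sup>2 + (Im y')\<^sup>2 \<le> 1" by (simp add: cmod_power2)
  then have "(Im y')\<^sup>2 \<le> S\<^sup>2" using Re unfolding S_def by (simp add: sin_squared_eq)
  then have imS: "\<bar>Im y'\<bar> \<le> S" using S0 power2_le_imp_le[of "\<bar>Im y'\<bar>" S] by simp
  define u where "u = (Im y' + S) / (2*S)"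
  have u: "0 \<le> u" "u \<le> 1" unfolding u_def using imS S0 by (auto simp: field_simps)
  have a_eq: "a = v * cis (-(g/2))" and b_eq: "a * cis g = v * cis (g/2)"
    unfolding v_def by (simp_all add: mult.assoc cis_mult)
  have "(1-u) *\<^sub>R a + u *\<^sub>R (a * cis g)
      = v * (complex_of_real (1-u) * cis (-(g/2)) + complex_of_real u * cis (g/2))"
    unfolding scaleR_conv_of_real b_eq by (subst (1) a_eq) (simp add: algebra_simps)
  also have "complex_of_real (1-u) * cis (-(g/2)) + complex_of_real u * cis (g/2) = y'"
    using S0 by (simp add: complex_eq_iff Re S_def[symmetric] u_def field_simps)
  finally have "y = (1-u) *\<^sub>R a + u *\<^sub>R (a * cis g)" using yy by simp
  then show ?thesis using u unfolding closed_segment_def by blast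
qed

lemma chord_line_in_convex_hull:
  assumes "circle_block A" "a \<in> A" "norm y \<le> 1"
    "(a * cis (gap A a / 2)) \<bullet> y = cos (gap A a / 2)"
  shows "y \<in> convex hull A"
proof -
  obtain b where b: "b \<in> A" "b = a * cis (gap A a)" using successor_in_block[OF assms(1,2)] by blast
  have "y \<in> closed_segment a b"
    using chord_line_in_segment[OF circle_block_norm[OF assms(1,2)] gap_pos[OF assms(1,2)]
        gap_less_2pi[OF assms(1,2)] assms(3,4)] b(2) by simp
  also have "closed_segment a b \<subseteq> convex hull A"
    unfolding segment_convex_hull using assms(2) b(1) by (intro hull_mono) auto
  finally show ?thesis .
qed

text \<open>A segment from a vertex into the cap of \<open>j\<close> crosses the chord of \<open>j\<close> inside the polygon, so
  its part before the crossing lies in the polygon.\<close>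

lemma segment_outside_cap_in_convex_hull:
  assumes A: "circle_block A" and a1: "a1 \<in> A" and j: "j \<in> A" and q: "norm q \<le> 1" "q \<in> cap A j"
    and y: "y \<in> closed_segment a1 q" "y \<notin> cap A j"
  shows "y \<in> convex hull A"
proof -
  define f where "f x = (j * cis (gap A j / 2)) \<bullet> x - cos (gap A j / 2)" for x
  have lin: "f ((1-t) *\<^sub>R x + t *\<^sub>R z) = (1-t) * f x + t * f z" for t x z
    unfolding f_def by (simp add: inner_add_right algebra_simps)
  have f0: "f a1 \<le> 0" using vertex_notin_cap[OF A j a1] by (simp add: f_def cap_def)
  have f1: "f q > 0" using q by (simp add: f_def cap_def)
  obtain \<mu> where \<mu>: "0 \<le> \<mu>" "\<mu> \<le> 1" "y = (1-\<mu>) *\<^sub>R a1 + \<mu> *\<^sub>R q"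
    using y(1) unfolding closed_segment_def by blast
  have a1h: "a1 \<in> convex hull A" by (rule hull_inc[OF a1])
  define u0 where "u0 = - f a1 / (f q - f a1)"
  have "f y \<le> 0" using y(2) by (simp add: f_def cap_def)
  then have "(1-\<mu>) * f a1 + \<mu> * f q \<le> 0" using lin[of \<mu> a1 q] \<mu>(3) by simp
  then have \<mu>u0: "\<mu> \<le> u0" and u01: "0 \<le> u0" "u0 \<le> 1"
    unfolding u0_def using f0 f1 by (auto simp: field_simps)
  define w where "w = (1-u0) *\<^sub>R a1 + u0 *\<^sub>R q"
  have "f w = 0" unfolding w_def lin u0_def using f0 f1 by (simp add: field_simps)
  moreover have "norm w \<le> 1"
    using convexD[OF convex_cball, of a1 0 1 q "1-u0" u0] q u01 circle_block_norm[OF A a1]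
    by (simp add: w_def)
  ultimately have wh: "w \<in> convex hull A"
    using chord_line_in_convex_hull[OF A j] by (simp add: f_def)
  show ?thesis
  proof (cases "u0 = 0")
    case True
    then show ?thesis using \<mu>u0 \<mu> a1h by simp
  next
    case False
    define \<theta> where "\<theta> = \<mu> / u0"
    have \<theta>: "0 \<le> \<theta>" "\<theta> \<le> 1" "\<theta> * u0 = \<mu>"
      unfolding \<theta>_def using \<mu> \<mu>u0 u01 False by (auto simp: field_simps)
    then have "y = (1-\<theta>) *\<^sub>R a1 + \<theta> *\<^sub>R w"
      unfolding w_def \<mu>(3) by (simp add: algebra_simps flip: \<theta>(3))
    then show ?thesis using convexD[OF convex_convex_hull a1h wh, of "1-\<theta>" \<theta>] \<theta> by simp
  qed
qed

lemma disk_in_convex_hull_or_cap: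
  assumes A: "circle_block A" and y: "norm y \<le> 1" "y \<notin> convex hull A"
  obtains a where "a \<in> A" "y \<in> cap A a"
proof (cases "norm y = 1")
  case True
  moreover have "y \<notin> A" using y(2) hull_inc[of y A convex] by blast
  ultimately show ?thesis using circle_in_caps[OF A] that by blast
next
  case False
  obtain a1 where a1: "a1 \<in> A" using circle_block_nonempty[OF A] by blast
  have "y - a1 \<noteq> 0" using False y circle_block_norm[OF A a1] by auto
  then obtain l where l: "l \<ge> 0" "norm (y + of_real l * (y - a1)) = 1"
    using ray_meets_circle[OF y(1)] by blast
  define q where "q = y + of_real l * (y - a1)"
  define \<mu> where "\<mu> = 1 / (1 + l)"
  have \<mu>: "0 \<le> \<mu>" "\<mu> \<le> 1" "\<mu> * (1 + l) = 1" unfolding \<mu>_def using l(1) by auto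
  have "(1-\<mu>) *\<^sub>R a1 + \<mu> *\<^sub>R q = (1 - \<mu> * (1 + l)) *\<^sub>R a1 + (\<mu> * (1 + l)) *\<^sub>R y"
    unfolding q_def scaleR_conv_of_real by (simp add: algebra_simps)
  then have "y = (1-\<mu>) *\<^sub>R a1 + \<mu> *\<^sub>R q" using \<mu>(3) by simp
  then have yq: "y \<in> closed_segment a1 q" unfolding closed_segment_def using \<mu> by blast
  have "q \<notin> A"
  proof
    assume "q \<in> A"
    then have "closed_segment a1 q \<subseteq> convex hull A"
      using a1 unfolding segment_convex_hull by (intro hull_mono) auto
    then show False using yq y(2) by blast
  qed
  then obtain j where j: "j \<in> A" "q \<in> cap A j" using circle_in_caps[OF A] l(2) q_def by metis
  show ?thesis
    using segment_outside_cap_in_convex_hull[OF A a1 j(1) _ j(2) yq] l(2) y(2) that j(1)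
    unfolding q_def by fastforce
qed

lemma connected_subset_of_disjoint_opens:
  assumes "connected S" "S \<subseteq> (\<Union>i\<in>I. U i)" "\<And>i. i \<in> I \<Longrightarrow> open (U i)"
    "\<And>i j. i \<in> I \<Longrightarrow> j \<in> I \<Longrightarrow> i \<noteq> j \<Longrightarrow> U i \<inter> U j \<inter> S = {}"
    "i \<in> I" "x \<in> S" "x \<in> U i"
  shows "S \<subseteq> U i"
proof -
  define V where "V = (\<Union>j\<in>I - {i}. U j)"
  have "open V" unfolding V_def using assms(3) by auto
  moreover have "U i \<inter> V \<inter> S = {}" unfolding V_def using assms(4,5) by blast
  moreover have "S \<subseteq> U i \<union> V" unfolding V_def using assms(2) by blast
  ultimately have "U i \<inter> S = {} \<or> V \<inter> S = {}"
    using connectedD[OF assms(1) assms(3)[OF assms(5)]] by blast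
  then show ?thesis using \<open>S \<subseteq> U i \<union> V\<close> assms(6,7) by blast
qed

lemma connected_subset_cap:
  assumes A: "circle_block A" and S: "connected S" "S \<subseteq> cball 0 1" "S \<subseteq> (\<Union>a\<in>A. cap A a)"
    and "a \<in> A" "x \<in> S" "x \<in> cap A a"
  shows "S \<subseteq> cap A a"
proof (rule connected_subset_of_disjoint_opens[OF S(1,3) open_cap _ assms(5-7)])
  show "cap A i \<inter> cap A j \<inter> S = {}" if "i \<in> A" "j \<in> A" "i \<noteq> j" for i j
    using caps_disjoint[OF A that] S(2) by fastforce
qed

lemma convex_hull_subset_cap:
  assumes A: "circle_block A" and B: "circle_block B"
    and disj: "convex hull A \<inter> convex hull B = {}"
  obtains b where "b \<in> B" "convex hull A \<subseteq> cap B b"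
proof -
  obtain a where a: "a \<in> A" using circle_block_nonempty[OF A] by blast
  have cover: "convex hull A \<subseteq> (\<Union>b\<in>B. cap B b)"
  proof
    fix y assume y: "y \<in> convex hull A"
    then have "norm y \<le> 1" using convex_hull_circle_block_subset_cball[OF A] by auto
    moreover have "y \<notin> convex hull B" using y disj by auto
    ultimately show "y \<in> (\<Union>b\<in>B. cap B b)" using disk_in_convex_hull_or_cap[OF B] by blast
  qed
  have ah: "a \<in> convex hull A" by (rule hull_inc[OF a])
  then obtain b where b: "b \<in> B" "a \<in> cap B b" using cover by blast
  have "convex hull A \<subseteq> cap B b"
    using connected_subset_cap[OF B convex_connected[OF convex_convex_hull]
        convex_hull_circle_block_subset_cball[OF A] cover b(1) ah b(2)] .
  then show ?thesis using that b(1) by blast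
qed

section \<open>Cells of a noncrossing family of blocks\<close>

definition nc_family :: "complex set set \<Rightarrow> bool" where
  "nc_family N \<longleftrightarrow> finite N \<and> (\<forall>A\<in>N. circle_block A) \<and> noncrossing N"

text \<open>A label \<open>\<tau>\<close> chooses a vertex \<open>\<tau> A\<close> of every block \<open>A\<close>, i.e.\ one side of \<open>convex hull A\<close>;
  its cell is the part of the open disk on the chosen side of every block.\<close>

definition cell :: "complex set set \<Rightarrow> (complex set \<Rightarrow> complex) \<Rightarrow> complex set" where
  "cell N \<tau> = ball 0 1 \<inter> (\<Inter>A\<in>N. cap A (\<tau> A))"

definition cell_labels :: "complex set set \<Rightarrow> (complex set \<Rightarrow> complex) set" where
  "cell_labels N = {\<tau> \<in> Pi\<^sub>E N (\<lambda>A. A). cell N \<tau> \<noteq> {}}"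

definition disk_complement :: "complex set set \<Rightarrow> complex set" where
  "disk_complement N = ball 0 1 - (\<Union>A\<in>N. convex hull A)"

lemma nc_familyD:
  assumes "nc_family N"
  shows "finite N" "A \<in> N \<Longrightarrow> circle_block A"
    "A \<in> N \<Longrightarrow> B \<in> N \<Longrightarrow> A \<noteq> B \<Longrightarrow> convex hull A \<inter> convex hull B = {}"
  using assms by (auto simp: nc_family_def noncrossing_def)

lemma nc_family_subset: "nc_family N \<Longrightarrow> M \<subseteq> N \<Longrightarrow> nc_family M"
  unfolding nc_family_def noncrossing_def by (meson finite_subset subsetD)

lemma open_cell: "finite N \<Longrightarrow> open (cell N \<tau>)"
  unfolding cell_def by (intro open_Int open_INT) (auto simp: open_cap)

lemma convex_cell: "convex (cell N \<tau>)"
  unfolding cell_def by (intro convex_Int convex_INT) (auto simp: convex_cap)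

lemma cells_disjoint:
  assumes N: "nc_family N" and \<tau>: "\<tau> \<in> Pi\<^sub>E N (\<lambda>A. A)" "\<tau>' \<in> Pi\<^sub>E N (\<lambda>A. A)"
    and x: "x \<in> cell N \<tau>" "x \<in> cell N \<tau>'"
  shows "\<tau> = \<tau>'"
proof (rule PiE_ext[OF \<tau>])
  fix A assume A: "A \<in> N"
  then have "x \<in> cap A (\<tau> A) \<inter> cap A (\<tau>' A)" "norm x \<le> 1" using x by (auto simp: cell_def)
  then show "\<tau> A = \<tau>' A" using caps_disjoint[OF nc_familyD(2)[OF N A]] \<tau> A by blast
qed

lemma disk_complement_eq_Union_cells:
  assumes N: "nc_family N"
  shows "disk_complement N = (\<Union>\<tau>\<in>Pi\<^sub>E N (\<lambda>A. A). cell N \<tau>)"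
proof (intro set_eqI iffI)
  fix y assume y: "y \<in> disk_complement N"
  then have yb: "y \<in> ball 0 1" by (auto simp: disk_complement_def)
  have "\<exists>a. a \<in> A \<and> y \<in> cap A a" if A: "A \<in> N" for A
    using disk_in_convex_hull_or_cap[OF nc_familyD(2)[OF N A]] y yb A
    by (metis DiffD2 UN_I disk_complement_def less_imp_le mem_ball_0)
  then obtain \<tau> where "\<forall>A\<in>N. \<tau> A \<in> A \<and> y \<in> cap A (\<tau> A)" by metis
  then have "restrict \<tau> N \<in> Pi\<^sub>E N (\<lambda>A. A)" "y \<in> cell N (restrict \<tau> N)"
    using yb by (auto simp: cell_def)
  then show "y \<in> (\<Union>\<tau>\<in>Pi\<^sub>E N (\<lambda>A. A). cell N \<tau>)" by blast
next
  fix y assume "y \<in> (\<Union>\<tau>\<in>Pi\<^sub>E N (\<lambda>A. A). cell N \<tau>)"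
  then obtain \<tau> where \<tau>: "\<tau> \<in> Pi\<^sub>E N (\<lambda>A. A)" "y \<in> cell N \<tau>" by blast
  have "y \<notin> convex hull A" if A: "A \<in> N" for A
    using convex_hull_cap_disjoint[OF nc_familyD(2)[OF N A]] \<tau> A by (auto simp: cell_def)
  then show "y \<in> disk_complement N" using \<tau> by (auto simp: cell_def disk_complement_def)
qed

lemma components_disk_complement:
  assumes N: "nc_family N"
  shows "components (disk_complement N) = cell N ` cell_labels N"
proof (rule components_open_unique)
  show "disjoint (cell N ` cell_labels N)"
    unfolding disjoint_def cell_labels_def using cells_disjoint[OF N] by blast
  show "\<Union> (cell N ` cell_labels N) = disk_complement N"
    using disk_complement_eq_Union_cells[OF N] by (auto simp: cell_labels_def)
  show "open X \<and> connected X \<and> X \<noteq> {}" if "X \<in> cell N ` cell_labels N" for X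
    using that open_cell[OF nc_familyD(1)[OF N]] convex_cell convex_connected
    by (auto simp: cell_labels_def)
qed

lemma finite_cell_labels: "nc_family N \<Longrightarrow> finite (cell_labels N)"
  unfolding cell_labels_def nc_family_def circle_block_def
  by (rule finite_subset[of _ "Pi\<^sub>E N (\<lambda>A. A)"]) (auto intro: finite_PiE)

lemma card_components_disk_complement:
  assumes N: "nc_family N"
  shows "card (components (disk_complement N)) = card (cell_labels N)"
  unfolding components_disk_complement[OF N]
  using cells_disjoint[OF N] by (intro card_image inj_onI) (auto simp: cell_labels_def)

section \<open>Counting cells\<close>

text \<open>The midpoint of the chord of \<open>a\<close> lies in the polygon and in the open disk; pushing it slightly
  outwards enters the cap.\<close>

lemma open_superset_of_convex_hull_meets_cap:
  assumes A: "circle_block A" and a: "a \<in> A" and U: "open U" "convex hull A \<inter> ball 0 1 \<subseteq> U"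
  shows "U \<inter> cap A a \<noteq> {}"
proof -
  define g where "g = gap A a"
  define v where "v = a * cis (g/2)"
  define c where "c = cos (g/2)"
  have g: "0 < g" "g < 2*pi" unfolding g_def using gap_pos[OF A a] gap_less_2pi[OF A a] by auto
  have nv: "norm v = 1" using circle_block_norm[OF A a] by (simp add: v_def norm_mult)
  have c: "\<bar>c\<bar> < 1"
    using g cos_monotone_0_pi[of 0 "g/2"] cos_gt_neg1[of "g/2"] by (auto simp: c_def)
  obtain b where b: "b \<in> A" "b = a * cis g" using successor_in_block[OF A a] g_def by blast
  have "a = v * cis (-(g/2))" "b = v * cis (g/2)" unfolding v_def b(2) by (simp_all add: mult.assoc cis_mult)
  then have "(1/2) *\<^sub>R a + (1/2) *\<^sub>R b = v * ((cis (-(g/2)) + cis (g/2)) / 2)"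
    by (simp add: scaleR_conv_of_real field_simps)
  also have "(cis (-(g/2)) + cis (g/2)) / 2 = of_real c" by (simp add: complex_eq_iff c_def)
  finally have "(1/2) *\<^sub>R a + (1/2) *\<^sub>R b = of_real c * v" by (simp add: mult.commute)
  moreover have "(1/2) *\<^sub>R a + (1/2) *\<^sub>R b \<in> convex hull A"
    using convexD[OF convex_convex_hull hull_inc[OF a] hull_inc[OF b(1)], of "1/2" "1/2"] by simp
  moreover have "norm (of_real c * v) < 1" using nv c by (simp add: norm_mult)
  ultimately have "of_real c * v \<in> U" using U(2) by auto
  then obtain \<epsilon> where \<epsilon>: "\<epsilon> > 0" "ball (of_real c * v) \<epsilon> \<subseteq> U"
    using U(1) open_contains_ball by blast
  define \<delta> where "\<delta> = min (\<epsilon>/2) ((1 - c)/2)"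
  have \<delta>: "0 < \<delta>" "\<delta> < \<epsilon>" unfolding \<delta>_def using \<epsilon> c by auto
  define p where "p = of_real (c + \<delta>) * v"
  have "dist (of_real c * v) p = \<delta>" using nv \<delta> by (simp add: p_def dist_norm norm_mult algebra_simps)
  then have "p \<in> U" using \<epsilon> \<delta> by auto
  moreover have "p = (c + \<delta>) *\<^sub>R v" by (simp add: p_def scaleR_conv_of_real)
  then have "v \<bullet> p = (c + \<delta>) * (v \<bullet> v)" by simp
  then have "v \<bullet> p = c + \<delta>" using nv by (simp add: power2_norm_eq_inner[symmetric])
  then have "p \<in> cap A a" using \<delta> by (simp add: cap_def v_def c_def g_def)
  ultimately show ?thesis by blast
qed

lemma cell_insert:
  assumes "A \<notin> N"
  shows "cell (insert A N) (\<tau>(A := a)) = cell N \<tau> \<inter> cap A a"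
proof -
  have "(\<Inter>B\<in>N. cap B ((\<tau>(A := a)) B)) = (\<Inter>B\<in>N. cap B (\<tau> B))"
    using assms by (intro INF_cong refl) auto
  then show ?thesis by (auto simp: cell_def)
qed

lemma card_cell_labels_insert_sum:
  assumes N: "nc_family (insert A N)" and AN: "A \<notin> N"
  shows "card (cell_labels (insert A N))
    = (\<Sum>\<tau>\<in>cell_labels N. card {a \<in> A. cell N \<tau> \<inter> cap A a \<noteq> {}})"
proof -
  define f where "f \<tau> = {a \<in> A. cell N \<tau> \<inter> cap A a \<noteq> {}}" for \<tau>
  define F where "F = (\<lambda>(\<tau>::complex set \<Rightarrow> complex, a). \<tau>(A := a))"
  have "cell_labels (insert A N) = F ` (SIGMA \<tau>:cell_labels N. f \<tau>)"
  proof (intro set_eqI iffI)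
    fix \<sigma> assume \<sigma>: "\<sigma> \<in> cell_labels (insert A N)"
    then obtain a \<tau> where a\<tau>: "a \<in> A" "\<tau> \<in> Pi\<^sub>E N (\<lambda>A. A)" "\<sigma> = \<tau>(A := a)"
      unfolding cell_labels_def PiE_insert_eq by auto
    then have "cell N \<tau> \<inter> cap A a \<noteq> {}" using \<sigma> cell_insert[OF AN] by (auto simp: cell_labels_def)
    then have "\<tau> \<in> cell_labels N" "a \<in> f \<tau>" using a\<tau> by (auto simp: cell_labels_def f_def)
    then show "\<sigma> \<in> F ` (SIGMA \<tau>:cell_labels N. f \<tau>)" using a\<tau>(3) by (force simp: F_def)
  next
    fix \<sigma> assume "\<sigma> \<in> F ` (SIGMA \<tau>:cell_labels N. f \<tau>)"
    then obtain \<tau> a where \<tau>a: "\<tau> \<in> cell_labels N" "a \<in> f \<tau>" "\<sigma> = \<tau>(A := a)" by (auto simp: F_def)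
    then have "\<sigma> \<in> Pi\<^sub>E (insert A N) (\<lambda>A. A)"
      using PiE_fun_upd[of a "\<lambda>A. A" A \<tau> N] by (simp add: cell_labels_def f_def)
    moreover have "cell (insert A N) \<sigma> \<noteq> {}" using \<tau>a cell_insert[OF AN] by (simp add: f_def)
    ultimately show "\<sigma> \<in> cell_labels (insert A N)" by (simp add: cell_labels_def)
  qed
  moreover have "inj_on F (SIGMA \<tau>:cell_labels N. f \<tau>)"
  proof (rule inj_onI, clarsimp simp: F_def)
    fix \<tau>1 a1 \<tau>2 a2 assume \<tau>: "\<tau>1 \<in> cell_labels N" "\<tau>2 \<in> cell_labels N"
      and eq: "\<tau>1(A := a1) = \<tau>2(A := a2)"
    show "\<tau>1 = \<tau>2 \<and> a1 = a2"
    proof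
      show "\<tau>1 = \<tau>2"
      proof (rule PiE_ext)
        show "\<tau>1 \<in> Pi\<^sub>E N (\<lambda>A. A)" "\<tau>2 \<in> Pi\<^sub>E N (\<lambda>A. A)" using \<tau> by (simp_all add: cell_labels_def)
        fix B assume "B \<in> N"
        then have "B \<noteq> A" using AN by blast
        then show "\<tau>1 B = \<tau>2 B" using fun_cong[OF eq, of B] by simp
      qed
      show "a1 = a2" using fun_cong[OF eq, of A] by simp
    qed
  qed
  moreover have "finite (cell_labels N)" using finite_cell_labels nc_family_subset[OF N] by blast
  moreover have "finite (f \<tau>)" for \<tau> using nc_familyD(2)[OF N] by (simp add: f_def circle_block_def)
  ultimately show ?thesis by (simp add: card_image card_SigmaI f_def)
qed

lemma cell_containing_convex_hull:
  assumes N: "nc_family (insert A N)" and AN: "A \<notin> N"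
  obtains \<tau>0 where "\<tau>0 \<in> cell_labels N" "convex hull A \<inter> ball 0 1 \<subseteq> cell N \<tau>0"
    "{a \<in> A. cell N \<tau>0 \<inter> cap A a \<noteq> {}} = A"
proof -
  have A: "circle_block A" using nc_familyD(2)[OF N] by blast
  have "\<exists>b. b \<in> B \<and> convex hull A \<subseteq> cap B b" if B: "B \<in> N" for B
    using convex_hull_subset_cap[OF A nc_familyD(2)[OF N] nc_familyD(3)[OF N]] B AN by blast
  then obtain \<tau> where \<tau>: "\<forall>B\<in>N. \<tau> B \<in> B \<and> convex hull A \<subseteq> cap B (\<tau> B)" by metis
  define \<tau>0 where "\<tau>0 = restrict \<tau> N"
  have hull: "convex hull A \<inter> ball 0 1 \<subseteq> cell N \<tau>0" using \<tau> by (auto simp: cell_def \<tau>0_def)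
  have all: "{a \<in> A. cell N \<tau>0 \<inter> cap A a \<noteq> {}} = A"
    using open_superset_of_convex_hull_meets_cap[OF A _ open_cell hull] nc_familyD(1)[OF N] by auto
  then have "cell N \<tau>0 \<noteq> {}" using circle_block_nonempty[OF A] by auto
  then have "\<tau>0 \<in> cell_labels N" using \<tau> by (auto simp: cell_labels_def \<tau>0_def)
  then show ?thesis using that hull all by blast
qed

lemma cell_disjoint_convex_hull_in_one_cap:
  assumes A: "circle_block A" and \<tau>: "\<tau> \<in> cell_labels N" and fin: "finite N"
    and disj: "cell N \<tau> \<inter> convex hull A = {}"
  shows "card {a \<in> A. cell N \<tau> \<inter> cap A a \<noteq> {}} = 1"
proof -
  have disk: "cell N \<tau> \<subseteq> cball 0 1" by (auto simp: cell_def)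
  have cover: "cell N \<tau> \<subseteq> (\<Union>a\<in>A. cap A a)"
  proof
    fix y assume y: "y \<in> cell N \<tau>"
    then have "norm y \<le> 1" "y \<notin> convex hull A" using disk disj by auto
    then obtain a where "a \<in> A" "y \<in> cap A a" using disk_in_convex_hull_or_cap[OF A] by blast
    then show "y \<in> (\<Union>a\<in>A. cap A a)" by blast
  qed
  obtain x where x: "x \<in> cell N \<tau>" using \<tau> by (auto simp: cell_labels_def)
  then obtain a0 where a0: "a0 \<in> A" "x \<in> cap A a0" using cover by blast
  have sub: "cell N \<tau> \<subseteq> cap A a0"
    by (rule connected_subset_cap[OF A convex_connected[OF convex_cell] disk cover a0(1) x a0(2)])
  have "{a \<in> A. cell N \<tau> \<inter> cap A a \<noteq> {}} = {a0}"
  proof (intro set_eqI iffI)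
    fix a assume "a \<in> {a \<in> A. cell N \<tau> \<inter> cap A a \<noteq> {}}"
    then obtain y where "a \<in> A" "y \<in> cell N \<tau>" "y \<in> cap A a" by auto
    moreover have "y \<in> cap A a0" "norm y \<le> 1" using \<open>y \<in> cell N \<tau>\<close> sub disk by auto
    ultimately show "a \<in> {a0}" using caps_disjoint[OF A _ a0(1), of a y] by (cases "a = a0") auto
  qed (use a0 x in auto)
  then show ?thesis by simp
qed

lemma card_cell_labels_insert:
  assumes N: "nc_family (insert A N)" and AN: "A \<notin> N"
  shows "card (cell_labels (insert A N)) = card (cell_labels N) + (card A - 1)"
proof -
  have A: "circle_block A" and NN: "nc_family N"
    using nc_familyD(2)[OF N] nc_family_subset[OF N] by auto
  define f where "f \<tau> = card {a \<in> A. cell N \<tau> \<inter> cap A a \<noteq> {}}" for \<tau>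
  obtain \<tau>0 where \<tau>0: "\<tau>0 \<in> cell_labels N" "convex hull A \<inter> ball 0 1 \<subseteq> cell N \<tau>0"
    "{a \<in> A. cell N \<tau>0 \<inter> cap A a \<noteq> {}} = A"
    using cell_containing_convex_hull[OF N AN] by blast
  have "f \<tau> = 1" if "\<tau> \<in> cell_labels N - {\<tau>0}" for \<tau>
  proof -
    have "cell N \<tau> \<inter> convex hull A = {}"
    proof (rule equals0I)
      fix x assume x: "x \<in> cell N \<tau> \<inter> convex hull A"
      then have "x \<in> cell N \<tau>0" using \<tau>0(2) by (auto simp: cell_def)
      then have "\<tau> = \<tau>0"
        using cells_disjoint[OF NN, of \<tau> \<tau>0 x] x that \<tau>0(1) by (simp add: cell_labels_def)
      then show False using that by simp
    qed
    then show ?thesis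
      unfolding f_def using cell_disjoint_convex_hull_in_one_cap[OF A _ nc_familyD(1)[OF NN]] that by blast
  qed
  then have "(\<Sum>\<tau>\<in>cell_labels N. f \<tau>) = card A + (card (cell_labels N) - 1)"
    using \<tau>0(1,3) finite_cell_labels[OF NN] by (simp add: sum.remove f_def)
  moreover have "card (cell_labels N) \<ge> 1" "card A \<ge> 1"
    using \<tau>0(1) finite_cell_labels[OF NN] A by (auto simp: circle_block_def Suc_le_eq card_gt_0_iff)
  ultimately show ?thesis using card_cell_labels_insert_sum[OF N AN] unfolding f_def by simp
qed

lemma card_cell_labels:
  assumes "nc_family N"
  shows "card (cell_labels N) = 1 + (\<Sum>A\<in>N. card A - 1)"
  using nc_familyD(1)[OF assms] assms
proof (induction N rule: finite_induct)
  case empty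
  have "cell_labels {} = {\<lambda>x. undefined}" by (auto simp: cell_labels_def cell_def)
  then show ?case by simp
next
  case (insert A N)
  then show ?case using card_cell_labels_insert[OF insert.prems insert.hyps(2)]
    nc_family_subset[OF insert.prems] by auto
qed

section \<open>Arcs cut off by the blocks\<close>

definition cap_arc :: "complex set \<Rightarrow> complex \<Rightarrow> complex set" where
  "cap_arc A a = sphere 0 1 \<inter> cap A a"

lemma cap_arc_eq:
  assumes "circle_block A" "a \<in> A"
  shows "cap_arc A a = {z. norm z = 1 \<and> 0 < ccw_angle a z \<and> ccw_angle a z < gap A a}"
  using mem_cap_iff[OF assms] unfolding cap_arc_def by auto

lemma cap_arcs_disjoint:
  assumes "circle_block A" "a \<in> A" "a' \<in> A" "q \<in> cap_arc A a" "q \<in> cap_arc A a'"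
  shows "a = a'"
  using caps_disjoint_on_circle[OF assms(1-3)] assms(4,5) by (auto simp: cap_arc_def)

lemma connected_circle_arc: "connected ((\<lambda>t. a * cis t) ` {t1..t2})"
  by (intro connected_continuous_image) (auto intro!: continuous_intros simp: cis_conv_exp)

lemma connected_circle_subset_cap:
  assumes B: "circle_block B" and X: "connected X" "X \<subseteq> sphere 0 1" "X \<inter> B = {}"
    and "b \<in> B" "x \<in> X" "x \<in> cap B b"
  shows "X \<subseteq> cap B b"
proof (rule connected_subset_cap[OF B X(1) _ _ assms(5-7)])
  show "X \<subseteq> cball 0 1" using X(2) by auto
  show "X \<subseteq> (\<Union>b\<in>B. cap B b)"
  proof
    fix y assume "y \<in> X"
    then have "norm y = 1" "y \<notin> B" using X(2,3) by auto
    then obtain b where "b \<in> B" "y \<in> cap B b" using circle_in_caps[OF B] by blast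
    then show "y \<in> (\<Union>b\<in>B. cap B b)" by blast
  qed
qed

text \<open>If \<open>convex hull B\<close> is not in the cap of \<open>\<alpha>\<close>, the closed arc from \<open>\<alpha>\<close> to its successor avoids \<open>B\<close>, so it
  lies in the cap of \<open>B\<close> that contains \<open>A\<close>.\<close>

lemma cap_arc_subset:
  assumes A: "circle_block A" and B: "circle_block B" and disj: "convex hull A \<inter> convex hull B = {}"
    and \<alpha>: "\<alpha> \<in> A" and \<beta>: "\<beta> \<in> B" and A_cap: "convex hull A \<subseteq> cap B \<beta>"
    and \<alpha>': "\<alpha>' \<in> A" "\<alpha>' \<noteq> \<alpha>" and B_cap: "convex hull B \<subseteq> cap A \<alpha>'"
  shows "cap_arc A \<alpha> \<subseteq> cap_arc B \<beta>"
proof -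
  define g where "g = gap A \<alpha>"
  have g: "0 < g" "g < 2*pi" unfolding g_def using gap_pos[OF A \<alpha>] gap_less_2pi[OF A \<alpha>] by auto
  have na: "norm \<alpha> = 1" using circle_block_norm A \<alpha> by auto
  obtain b where b: "b \<in> A" "b = \<alpha> * cis g" using successor_in_block[OF A \<alpha>] g_def by blast
  define X where "X = (\<lambda>t. \<alpha> * cis t) ` {0..g}"
  have X: "X \<subseteq> sphere 0 1" unfolding X_def using na by (auto simp: norm_mult)
  have AB: "A \<inter> B = {}" using disj hull_subset[of A convex] hull_subset[of B convex] by blast
  have "X \<inter> B = {}"
  proof (rule equals0I)
    fix q assume q: "q \<in> X \<inter> B"
    then obtain t where t: "t \<in> {0..g}" "q = \<alpha> * cis t" unfolding X_def by auto
    consider "t = 0" | "t = g" | "0 < t \<and> t < g" using t by force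
    then show False
    proof cases
      case 1
      then show False using q t \<alpha> AB by auto
    next
      case 2
      then show False using q t b AB by auto
    next
      case 3
      have "ccw_angle \<alpha> q = t" using t 3 g by (intro ccw_angle_eqI[OF na]) auto
      then have "q \<in> cap A \<alpha>" using mem_cap_iff[OF A \<alpha>] t 3 na g_def by (simp add: norm_mult)
      moreover have "q \<in> cap A \<alpha>'" using q B_cap hull_subset[of B convex] by auto
      moreover have "norm q = 1" using t na by (simp add: norm_mult)
      ultimately show False using caps_disjoint_on_circle[OF A \<alpha> \<alpha>'(1)] \<alpha>'(2) by auto
    qed
  qed
  moreover have "\<alpha> \<in> X" unfolding X_def using g by (intro image_eqI[of _ _ 0]) auto
  moreover have "\<alpha> \<in> cap B \<beta>" using A_cap hull_inc[OF \<alpha>] by auto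
  ultimately have "X \<subseteq> cap B \<beta>"
    using connected_circle_subset_cap[OF B connected_circle_arc[of \<alpha> 0 g, folded X_def] X _ \<beta>] by blast
  moreover have "cap_arc A \<alpha> \<subseteq> X"
  proof
    fix q assume "q \<in> cap_arc A \<alpha>"
    then have "norm q = 1" "0 < ccw_angle \<alpha> q" "ccw_angle \<alpha> q < g"
      using cap_arc_eq[OF A \<alpha>] g_def by auto
    then show "q \<in> X" unfolding X_def using ccw_angle_cis[OF na] by (intro image_eqI) auto
  qed
  ultimately show ?thesis by (auto simp: cap_arc_def)
qed

lemma cap_arcs_cover_circle:
  assumes A: "circle_block A" and B: "circle_block B"
    and \<alpha>: "\<alpha> \<in> A" and \<beta>: "\<beta> \<in> B" and A_cap: "convex hull A \<subseteq> cap B \<beta>"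
    and B_cap: "convex hull B \<subseteq> cap A \<alpha>"
  shows "cap_arc A \<alpha> \<union> cap_arc B \<beta> = sphere 0 1"
proof -
  define g where "g = gap A \<alpha>"
  have g: "0 < g" "g < 2*pi" unfolding g_def using gap_pos[OF A \<alpha>] gap_less_2pi[OF A \<alpha>] by auto
  have na: "norm \<alpha> = 1" using circle_block_norm A \<alpha> by auto
  define Y where "Y = (\<lambda>t. \<alpha> * cis t) ` {g..2*pi}"
  have Y: "Y \<subseteq> sphere 0 1" unfolding Y_def using na by (auto simp: norm_mult)
  have "Y \<inter> cap A \<alpha> = {}"
  proof (rule equals0I)
    fix y assume y: "y \<in> Y \<inter> cap A \<alpha>"
    then obtain t where t: "t \<in> {g..2*pi}" "y = \<alpha> * cis t" unfolding Y_def by auto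
    have "norm y = 1" using t na by (simp add: norm_mult)
    then have c: "0 < ccw_angle \<alpha> y" "ccw_angle \<alpha> y < g" using mem_cap_iff[OF A \<alpha>] y g_def by auto
    show False
    proof (cases "t = 2*pi")
      case True
      then show False using c t ccw_angle_self[OF na] by simp
    next
      case False
      then have "ccw_angle \<alpha> y = t" using t g by (intro ccw_angle_eqI[OF na]) auto
      then show False using c t by simp
    qed
  qed
  then have "Y \<inter> B = {}" using B_cap hull_subset[of B convex] by blast
  moreover have "\<alpha> \<in> Y" unfolding Y_def using g by (intro image_eqI[of _ _ "2*pi"]) auto
  moreover have "\<alpha> \<in> cap B \<beta>" using A_cap hull_inc[OF \<alpha>] by auto
  ultimately have Y_cap: "Y \<subseteq> cap B \<beta>"
    using connected_circle_subset_cap[OF B connected_circle_arc[of \<alpha> g "2*pi", folded Y_def] Y _ \<beta>]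
    by blast
  have cover: "q \<in> cap_arc A \<alpha> \<union> cap_arc B \<beta>" if q: "norm q = 1" for q
  proof (cases "q \<in> cap A \<alpha>")
    case False
    define t where "t = ccw_angle \<alpha> q"
    have t: "0 \<le> t" "t < 2*pi" "q = \<alpha> * cis t"
      unfolding t_def using ccw_angle_nonneg ccw_angle_less_2pi ccw_angle_cis[OF na q] by auto
    have "t = 0 \<or> g \<le> t" using False mem_cap_iff[OF A \<alpha> q] g_def t_def t(1) by auto
    then have "q \<in> Y"
    proof
      assume "t = 0"
      then show "q \<in> Y" using \<open>\<alpha> \<in> Y\<close> t(3) by simp
    qed (use t in \<open>auto simp: Y_def\<close>)
    then show ?thesis using Y_cap q by (auto simp: cap_arc_def)
  qed (use q in \<open>auto simp: cap_arc_def\<close>)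
  show ?thesis
  proof
    show "sphere 0 1 \<subseteq> cap_arc A \<alpha> \<union> cap_arc B \<beta>" by (intro subsetI cover) simp
  qed (auto simp: cap_arc_def)
qed

lemma cap_arcs_nested_or_cover:
  assumes A: "circle_block A" and B: "circle_block B" and disj: "convex hull A \<inter> convex hull B = {}"
    and \<alpha>: "\<alpha> \<in> A" and \<beta>: "\<beta> \<in> B" and meet: "cap_arc A \<alpha> \<inter> cap_arc B \<beta> \<noteq> {}"
  shows "cap_arc A \<alpha> \<subseteq> cap_arc B \<beta> \<or> cap_arc B \<beta> \<subseteq> cap_arc A \<alpha>
    \<or> cap_arc A \<alpha> \<union> cap_arc B \<beta> = sphere 0 1"
proof -
  have disj': "convex hull B \<inter> convex hull A = {}" using disj by blast
  obtain \<beta>' where \<beta>': "\<beta>' \<in> B" "convex hull A \<subseteq> cap B \<beta>'"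
    using convex_hull_subset_cap[OF A B disj] by blast
  obtain \<alpha>' where \<alpha>': "\<alpha>' \<in> A" "convex hull B \<subseteq> cap A \<alpha>'"
    using convex_hull_subset_cap[OF B A disj'] by blast
  obtain q where q: "q \<in> cap_arc A \<alpha>" "q \<in> cap_arc B \<beta>" using meet by blast
  show ?thesis
  proof (cases "\<alpha>' = \<alpha>")
    case False
    have "cap_arc A \<alpha> \<subseteq> cap_arc B \<beta>'"
      using cap_arc_subset[OF A B disj \<alpha> \<beta>' \<alpha>'(1) False \<alpha>'(2)] .
    moreover have "\<beta>' = \<beta>" using cap_arcs_disjoint[OF B \<beta>'(1) \<beta> _ q(2)] calculation q(1) by blast
    ultimately show ?thesis by simp
  next
    case True
    show ?thesis
    proof (cases "\<beta>' = \<beta>")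
      case False
      then show ?thesis
        using cap_arc_subset[OF B A disj' \<beta> \<alpha>' \<beta>'(1) False \<beta>'(2)] True by simp
    qed (use cap_arcs_cover_circle[OF A B \<alpha> \<beta>] \<alpha>' \<beta>' True in simp)
  qed
qed

lemma cell_cap_arcs_meet:
  assumes N: "nc_family N" and \<tau>: "\<tau> \<in> cell_labels N" and A: "A \<in> N" and B: "B \<in> N"
  shows "cap_arc A (\<tau> A) \<inter> cap_arc B (\<tau> B) \<noteq> {}"
proof -
  obtain y where y: "y \<in> cell N \<tau>" using \<tau> by (auto simp: cell_labels_def)
  have "\<tau> A \<in> A" "\<tau> B \<in> B" using \<tau> A B by (auto simp: cell_labels_def)
  then have "norm (\<tau> A * cis (gap A (\<tau> A) / 2)) = 1" "norm (\<tau> B * cis (gap B (\<tau> B) / 2)) = 1"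
    using circle_block_norm nc_familyD(2)[OF N] A B by (auto simp: norm_mult)
  moreover have "norm y \<le> 1" "y \<in> cap A (\<tau> A)" "y \<in> cap B (\<tau> B)"
    using y A B by (auto simp: cell_def)
  ultimately obtain q where "norm q = 1" "q \<in> cap A (\<tau> A)" "q \<in> cap B (\<tau> B)"
    using halfplanes_meet_on_circle unfolding cap_def by (metis mem_Collect_eq)
  then show ?thesis by (auto simp: cap_arc_def)
qed

lemma cell_cap_arcs_nested_or_cover:
  assumes N: "nc_family N" and \<tau>: "\<tau> \<in> cell_labels N" and A: "A \<in> N" and B: "B \<in> N" "B \<noteq> A"
  shows "cap_arc A (\<tau> A) \<subseteq> cap_arc B (\<tau> B) \<or> cap_arc B (\<tau> B) \<subseteq> cap_arc A (\<tau> A)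
    \<or> cap_arc A (\<tau> A) \<union> cap_arc B (\<tau> B) = sphere 0 1"
  using cap_arcs_nested_or_cover[OF nc_familyD(2)[OF N A] nc_familyD(2)[OF N B(1)]
      nc_familyD(3)[OF N A B(1)] _ _ cell_cap_arcs_meet[OF N \<tau> A B(1)]] B(2) \<tau> A B(1)
  by (auto simp: cell_labels_def)

section \<open>Fibers of the power map and cells\<close>

lemma gap_eq_multiple:
  assumes d: "d \<ge> 1" and A: "circle_block A" and a: "a \<in> A" and deg: "\<And>z. z \<in> A \<Longrightarrow> z ^ d = a ^ d"
  obtains k where "1 \<le> k" "k \<le> d" "gap A a = real k * (2*pi / real d)"
proof -
  obtain b where b: "b \<in> A" "b \<noteq> a" "ccw_angle a b = gap A a" using gap_attained[OF A a] by blast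
  have "b \<in> power_fiber d a" using deg[OF b(1)] by (simp add: power_fiber_def)
  then obtain j where j: "j < d" "ccw_angle a b = real j * (2*pi / real d)"
    using ccw_angle_power_fiber_self[OF circle_block_norm[OF A a] d] by blast
  moreover have "j \<noteq> 0"
  proof
    assume "j = 0"
    then show False using j(2) b(3) gap_pos[OF A a] by simp
  qed
  ultimately show ?thesis using that[of j] b(3) by simp
qed

lemma card_power_fiber_cap_arc:
  assumes d: "d \<ge> 1" and A: "circle_block A" and a: "a \<in> A" and deg: "\<And>z. z \<in> A \<Longrightarrow> z ^ d = a ^ d"
  obtains k where "1 \<le> k" "k \<le> d"
    "\<And>w. norm w = 1 \<Longrightarrow> card (power_fiber d w \<inter> cap_arc A a) = (if a ^ d = w ^ d then k - 1 else k)"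
proof -
  obtain k where k: "1 \<le> k" "k \<le> d" "gap A a = real k * (2*pi / real d)"
    using gap_eq_multiple[OF d A a deg] by blast
  have "power_fiber d w \<inter> cap_arc A a
      = power_fiber d w \<inter> {z. 0 < ccw_angle a z \<and> ccw_angle a z < real k * (2*pi / real d)}"
    if "norm w = 1" for w
    using norm_power_fiber[OF _ that d] unfolding cap_arc_eq[OF A a] k(3) by auto
  then show ?thesis
    using that[OF k(1,2)] card_power_fiber_open_arc[OF circle_block_norm[OF A a] _ d k(1,2)] by simp
qed

lemma card_generic_power_fiber_outside_cap_arc_le:
  assumes d: "d \<ge> 1" and B: "circle_block B" and \<beta>: "\<beta> \<in> B" and deg: "\<And>z. z \<in> B \<Longrightarrow> z ^ d = \<beta> ^ d"
    and w: "norm w = 1" "\<beta> ^ d \<noteq> w ^ d" and \<alpha>: "norm \<alpha> = 1"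
  shows "card (power_fiber d w - cap_arc B \<beta>) \<le> card (power_fiber d \<alpha> - cap_arc B \<beta>)"
proof -
  obtain k where k: "1 \<le> k" "k \<le> d"
    "\<And>w. norm w = 1 \<Longrightarrow> card (power_fiber d w \<inter> cap_arc B \<beta>) = (if \<beta> ^ d = w ^ d then k - 1 else k)"
    using card_power_fiber_cap_arc[OF d B \<beta> deg] by blast
  have "card (power_fiber d x - cap_arc B \<beta>) = d - card (power_fiber d x \<inter> cap_arc B \<beta>)"
    if "norm x = 1" for x
    using card_power_fiber[OF that d] finite_power_fiber[OF d] by (simp add: card_Diff_subset_Int)
  then show ?thesis using k(3)[OF w(1)] k(3)[OF \<alpha>] w \<alpha> by (auto intro: diff_le_mono2)
qed

text \<open>The maximal members of a laminar family are disjoint, so the family's trace on \<open>W\<close> is no larger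
  than on \<open>F\<close>.\<close>

lemma laminar_family_not_cover:
  assumes fin: "finite Sh" "finite W" "finite F"
    and laminar: "\<And>I J. I \<in> Sh \<Longrightarrow> J \<in> Sh \<Longrightarrow> I \<subseteq> J \<or> J \<subseteq> I \<or> I \<inter> J = {}"
    and sub: "\<And>I. I \<in> Sh \<Longrightarrow> I \<subseteq> M"
    and le: "\<And>I. I \<in> Sh \<Longrightarrow> card (W \<inter> I) \<le> card (F \<inter> I)"
    and less: "card (F \<inter> M) < card (W \<inter> M)"
  shows "\<not> W \<inter> M \<subseteq> \<Union>Sh"
proof
  assume cover: "W \<inter> M \<subseteq> \<Union>Sh"
  define Mx where "Mx = {I \<in> Sh. \<forall>J\<in>Sh. I \<subseteq> J \<longrightarrow> I = J}"
  have finMx: "finite Mx" unfolding Mx_def using fin(1) by simp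
  have Sh_Mx: "\<Union>Sh \<subseteq> \<Union>Mx"
  proof
    fix x assume "x \<in> \<Union>Sh"
    then obtain I where I: "I \<in> Sh" "x \<in> I" by auto
    obtain m where "m \<in> Sh" "I \<subseteq> m" "\<forall>b\<in>Sh. m \<subseteq> b \<longrightarrow> m = b"
      using finite_has_maximal2[OF fin(1) I(1)] by blast
    then show "x \<in> \<Union>Mx" using I(2) unfolding Mx_def by auto
  qed
  have disj: "I \<inter> J = {}" if "I \<in> Mx" "J \<in> Mx" "I \<noteq> J" for I J
    using laminar[of I J] that unfolding Mx_def by blast
  have card_Un: "card (X \<inter> \<Union>Mx) = (\<Sum>I\<in>Mx. card (X \<inter> I))" if "finite X" for X
  proof -
    have "card (\<Union>I\<in>Mx. X \<inter> I) = (\<Sum>I\<in>Mx. card (X \<inter> I))"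
      using finMx that disj by (intro card_UN_disjoint) auto
    moreover have "X \<inter> \<Union>Mx = (\<Union>I\<in>Mx. X \<inter> I)" by auto
    ultimately show ?thesis by metis
  qed
  have "card (W \<inter> M) \<le> card (W \<inter> \<Union>Mx)" using cover Sh_Mx fin(2) by (intro card_mono) auto
  also have "\<dots> \<le> (\<Sum>I\<in>Mx. card (F \<inter> I))"
    unfolding card_Un[OF fin(2)] using le unfolding Mx_def by (intro sum_mono) auto
  also have "\<dots> = card (F \<inter> \<Union>Mx)" using card_Un[OF fin(3)] by simp
  also have "\<dots> \<le> card (F \<inter> M)" using sub fin(3) unfolding Mx_def by (intro card_mono) auto
  finally show False using less by simp
qed

lemma minimal_cell_arc_contains_complements:
  assumes N: "nc_family N" and \<tau>: "\<tau> \<in> cell_labels N" and As: "As \<in> N"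
    and min: "\<And>B. B \<in> N \<Longrightarrow> cap_arc B (\<tau> B) \<subseteq> cap_arc As (\<tau> As) \<Longrightarrow> cap_arc B (\<tau> B) = cap_arc As (\<tau> As)"
    and B: "B \<in> N" "\<not> cap_arc As (\<tau> As) \<subseteq> cap_arc B (\<tau> B)"
  shows "sphere 0 1 - cap_arc B (\<tau> B) \<subseteq> cap_arc As (\<tau> As)"
proof -
  have "B \<noteq> As" using B(2) by blast
  then show ?thesis using cell_cap_arcs_nested_or_cover[OF N \<tau> As B(1)] min[OF B(1)] B(2) by blast
qed

lemma cell_arc_complements_laminar:
  assumes N: "nc_family N" and \<tau>: "\<tau> \<in> cell_labels N" and B: "B1 \<in> N" "B2 \<in> N"
  defines "I \<equiv> sphere 0 1 - cap_arc B1 (\<tau> B1)" and "J \<equiv> sphere 0 1 - cap_arc B2 (\<tau> B2)"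
  shows "I \<subseteq> J \<or> J \<subseteq> I \<or> I \<inter> J = {}"
  using cell_cap_arcs_nested_or_cover[OF N \<tau> B] unfolding I_def J_def by (cases "B1 = B2") auto

text \<open>Let \<open>M\<close> be a minimal arc of the cell. The arcs of the cell not containing \<open>M\<close> have laminar
  complements inside \<open>M\<close>, each holding at least as many points of the fiber \<open>F\<close> through the vertex of
  \<open>M\<close> as of the generic fiber \<open>W\<close>; but \<open>M\<close> itself holds one point more of \<open>W\<close> than of \<open>F\<close>.
  So some point of \<open>W \<inter> M\<close> escapes all complements, i.e.\ lies on every arc of the cell.\<close>

lemma generic_power_fiber_meets_cell:
  assumes d: "d \<ge> 1" and N: "nc_family N" "degree_partition d N"
    and w: "norm w = 1" "\<forall>A\<in>N. \<forall>z\<in>A. z ^ d \<noteq> w ^ d" and \<tau>: "\<tau> \<in> cell_labels N"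
  obtains q where "q \<in> power_fiber d w" "\<forall>A\<in>N. q \<in> cap A (\<tau> A)"
proof (cases "N = {}")
  case True
  then show ?thesis using that[of w] by (simp add: power_fiber_def)
next
  case False
  define arc where "arc B = cap_arc B (\<tau> B)" for B
  have \<tau>B: "\<tau> B \<in> B" if "B \<in> N" for B
    using \<tau> that PiE_mem by (fastforce simp: cell_labels_def)
  have block: "circle_block B" "\<tau> B \<in> B" "\<And>z. z \<in> B \<Longrightarrow> z ^ d = \<tau> B ^ d" if "B \<in> N" for B
    using nc_familyD(2)[OF N(1) that] \<tau>B[OF that] N(2) that unfolding degree_partition_def by blast+
  have "finite (arc ` N)" "arc ` N \<noteq> {}" using nc_familyD(1)[OF N(1)] False by auto
  then obtain M where "M \<in> arc ` N" "\<forall>X\<in>arc ` N. X \<subseteq> M \<longrightarrow> M = X"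
    using finite_has_minimal[of "arc ` N"] by blast
  then obtain As where As: "As \<in> N" "M = arc As" and min: "\<And>B. B \<in> N \<Longrightarrow> arc B \<subseteq> M \<Longrightarrow> arc B = M"
    by blast
  define \<alpha> where "\<alpha> = \<tau> As"
  have \<alpha>: "norm \<alpha> = 1" using block[OF As(1)] circle_block_norm \<alpha>_def by blast
  define W where "W = power_fiber d w"
  define F where "F = power_fiber d \<alpha>"
  have fin: "finite W" "finite F" using finite_power_fiber[OF d] by (simp_all add: W_def F_def)
  have circle: "W \<subseteq> sphere 0 1" "F \<subseteq> sphere 0 1"
    using norm_power_fiber[OF _ w(1) d] norm_power_fiber[OF _ \<alpha> d] by (auto simp: W_def F_def)
  define Co where "Co = {B \<in> N. \<not> M \<subseteq> arc B}"
  define Sh where "Sh = (\<lambda>B. sphere 0 1 - arc B) ` Co"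
  have in_M: "I \<subseteq> M" if "I \<in> Sh" for I
    using that minimal_cell_arc_contains_complements[OF N(1) \<tau> As(1)] min As(2)
    by (auto simp: Sh_def Co_def arc_def)
  have laminar: "I \<subseteq> J \<or> J \<subseteq> I \<or> I \<inter> J = {}" if "I \<in> Sh" "J \<in> Sh" for I J
    using that cell_arc_complements_laminar[OF N(1) \<tau>] by (auto simp: Sh_def Co_def arc_def)
  have le: "card (W \<inter> I) \<le> card (F \<inter> I)" if I: "I \<in> Sh" for I
  proof -
    obtain B where B: "B \<in> N" "I = sphere 0 1 - arc B" using I by (auto simp: Sh_def Co_def)
    have "W \<inter> I = W - arc B" "F \<inter> I = F - arc B" using circle B(2) by auto
    then show ?thesis
      using card_generic_power_fiber_outside_cap_arc_le[OF d block[OF B(1)] w(1) _ \<alpha>] w(2) B(1)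
        block(2)[OF B(1)] by (simp add: W_def F_def arc_def)
  qed
  obtain k where "\<And>x. norm x = 1 \<Longrightarrow> card (power_fiber d x \<inter> M) = (if \<alpha> ^ d = x ^ d then k - 1 else k)"
    "1 \<le> k"
    using card_power_fiber_cap_arc[OF d block[OF As(1)]] unfolding As(2) arc_def \<alpha>_def by blast
  then have "card (F \<inter> M) < card (W \<inter> M)"
    using w \<alpha> block(2)[OF As(1)] As(1) unfolding W_def F_def \<alpha>_def by force
  moreover have "finite Sh" using nc_familyD(1)[OF N(1)] by (simp add: Sh_def Co_def)
  ultimately have "\<not> W \<inter> M \<subseteq> \<Union>Sh"
    using laminar_family_not_cover[of Sh W F M] fin laminar in_M le by blast
  then obtain q where q: "q \<in> W" "q \<in> M" "q \<notin> \<Union>Sh" by blast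
  have "q \<in> cap B (\<tau> B)" if B: "B \<in> N" for B
  proof (cases "M \<subseteq> arc B")
    case False
    then have "q \<in> arc B" using q circle B by (auto simp: Sh_def Co_def)
    then show ?thesis by (simp add: arc_def cap_arc_def)
  qed (use q in \<open>auto simp: arc_def cap_arc_def\<close>)
  then show ?thesis using that q(1) by (simp add: W_def)
qed

lemma infinite_unit_circle: "infinite (sphere (0::complex) 1)"
proof
  assume "finite (sphere (0::complex) 1)"
  moreover have "connected (sphere (0::complex) 1)" by (rule connected_sphere) simp
  ultimately have "sphere (0::complex) 1 = {} \<or> (\<exists>a. sphere (0::complex) 1 = {a})"
    using connected_finite_iff_sing by blast
  moreover have "1 \<in> sphere (0::complex) 1" "-1 \<in> sphere (0::complex) 1" by auto
  ultimately show False by (metis empty_iff singletonD one_neq_neg_one)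
qed

lemma exists_generic_circle_point:
  assumes d: "d \<ge> 1" and S: "finite S"
  obtains w :: complex where "norm w = 1" "\<forall>z\<in>S. z ^ d \<noteq> w ^ d"
proof -
  have "finite (\<Union>z\<in>S. power_fiber d z)" using S finite_power_fiber[OF d] by blast
  then have "\<not> sphere 0 1 \<subseteq> (\<Union>z\<in>S. power_fiber d z)"
    using infinite_unit_circle finite_subset by blast
  then obtain w where "w \<in> sphere 0 1" "w \<notin> (\<Union>z\<in>S. power_fiber d z)" by blast
  then show ?thesis using that by (auto simp: power_fiber_def eq_commute[of "w ^ d"])
qed

definition circle_label :: "complex set set \<Rightarrow> complex \<Rightarrow> complex set \<Rightarrow> complex" where
  "circle_label N q = (\<lambda>A\<in>N. SOME a. a \<in> A \<and> q \<in> cap A a)"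

lemma circle_label:
  assumes N: "nc_family N" and q: "norm q = 1" "\<forall>A\<in>N. q \<notin> A"
  shows "circle_label N q \<in> Pi\<^sub>E N (\<lambda>A. A)" "\<forall>A\<in>N. q \<in> cap A (circle_label N q A)"
proof -
  have ex: "\<exists>a. a \<in> A \<and> q \<in> cap A a" if "A \<in> N" for A
    using circle_in_caps[OF nc_familyD(2)[OF N that] q(1)] q(2) that by blast
  have "(SOME a. a \<in> A \<and> q \<in> cap A a) \<in> A \<and> q \<in> cap A (SOME a. a \<in> A \<and> q \<in> cap A a)"
    if "A \<in> N" for A
    using someI_ex[OF ex[OF that]] .
  then show "circle_label N q \<in> Pi\<^sub>E N (\<lambda>A. A)" "\<forall>A\<in>N. q \<in> cap A (circle_label N q A)"
    by (auto simp: circle_label_def)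
qed

lemma circle_label_unique:
  assumes N: "nc_family N" and q: "norm q = 1" "\<forall>A\<in>N. q \<notin> A"
    and \<tau>: "\<tau> \<in> Pi\<^sub>E N (\<lambda>A. A)" "\<forall>A\<in>N. q \<in> cap A (\<tau> A)"
  shows "circle_label N q = \<tau>"
proof (rule PiE_ext[OF circle_label(1)[OF N q] \<tau>(1)])
  fix A assume A: "A \<in> N"
  then show "circle_label N q A = \<tau> A"
    using caps_disjoint[OF nc_familyD(2)[OF N A] _ _ _, of "circle_label N q A" "\<tau> A" q]
      circle_label[OF N q] \<tau> q(1) by (metis IntI PiE_mem order_refl)
qed

text \<open>Pushing the point slightly into the disk lands in the cell of its label.\<close>

lemma circle_label_in_cell_labels:
  assumes N: "nc_family N" and q: "norm q = 1" "\<forall>A\<in>N. q \<notin> A"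
  shows "circle_label N q \<in> cell_labels N"
proof -
  define U where "U = (\<Inter>A\<in>N. cap A (circle_label N q A))"
  have "open U" unfolding U_def using nc_familyD(1)[OF N] by (intro open_INT) (auto simp: open_cap)
  moreover have "q \<in> U" unfolding U_def using circle_label(2)[OF N q] by auto
  ultimately obtain e where e: "e > 0" "ball q e \<subseteq> U" using open_contains_ball by blast
  define \<delta> where "\<delta> = min (e/2) (1/2)"
  have \<delta>: "0 < \<delta>" "\<delta> < 1" "\<delta> < e" unfolding \<delta>_def using e by auto
  define p where "p = of_real (1 - \<delta>) * q"
  have "norm p = \<bar>1 - \<delta>\<bar> * norm q" unfolding p_def by (simp only: norm_mult norm_of_real)
  then have "norm p = 1 - \<delta>" using q \<delta> by simp
  moreover have "dist q p = \<delta>" using q \<delta> by (simp add: p_def dist_norm norm_mult algebra_simps)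
  then have "p \<in> U" using e \<delta> by auto
  ultimately have "p \<in> cell N (circle_label N q)" using \<delta> by (simp add: cell_def U_def)
  then show ?thesis using circle_label(1)[OF N q] by (auto simp: cell_labels_def)
qed

lemma generic_power_fiber_labels:
  assumes d: "d \<ge> 1" and N: "nc_family N" "degree_partition d N"
    and w: "norm w = 1" "\<forall>A\<in>N. \<forall>z\<in>A. z ^ d \<noteq> w ^ d"
  shows "circle_label N ` power_fiber d w = cell_labels N"
    and "\<And>q. q \<in> power_fiber d w \<Longrightarrow> norm q = 1 \<and> (\<forall>A\<in>N. q \<notin> A)"
proof -
  show off: "norm q = 1 \<and> (\<forall>A\<in>N. q \<notin> A)" if "q \<in> power_fiber d w" for q
    using norm_power_fiber[OF that w(1) d] that w(2) by (auto simp: power_fiber_def)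
  show "circle_label N ` power_fiber d w = cell_labels N"
  proof
    show "circle_label N ` power_fiber d w \<subseteq> cell_labels N"
      using circle_label_in_cell_labels[OF N(1)] off by blast
  next
    show "cell_labels N \<subseteq> circle_label N ` power_fiber d w"
    proof
      fix \<tau> assume \<tau>: "\<tau> \<in> cell_labels N"
      obtain q where q: "q \<in> power_fiber d w" "\<forall>A\<in>N. q \<in> cap A (\<tau> A)"
        using generic_power_fiber_meets_cell[OF d N w \<tau>] by blast
      then have "circle_label N q = \<tau>"
        using circle_label_unique[OF N(1)] off \<tau> by (simp add: cell_labels_def)
      then show "\<tau> \<in> circle_label N ` power_fiber d w" using q(1) by blast
    qed
  qed
qed

lemma card_cell_labels_le:
  assumes d: "d \<ge> 1" and N: "nc_family N" "degree_partition d N"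
  shows "card (cell_labels N) \<le> d"
proof -
  have "finite (\<Union>N)" using N(1) by (auto simp: nc_family_def circle_block_def)
  then obtain w where "norm w = 1" "\<forall>z\<in>\<Union>N. z ^ d \<noteq> w ^ d"
    by (rule exists_generic_circle_point[OF d])
  then have w: "norm w = 1" "\<forall>A\<in>N. \<forall>z\<in>A. z ^ d \<noteq> w ^ d" by auto
  then show ?thesis
    using generic_power_fiber_labels(1)[OF d N w] card_image_le[OF finite_power_fiber[OF d]]
      card_power_fiber[OF w(1) d] by metis
qed

text \<open>With fewer than \<open>d\<close> cells, two points of a generic fiber share a cell, and the chord joining
  them stays in the caps of that cell.\<close>

lemma exists_chord_avoiding_blocks:
  assumes d: "d \<ge> 1" and N: "nc_family N" "degree_partition d N" and less: "card (cell_labels N) < d"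
  obtains q1 q2 where "q1 \<noteq> q2" "norm q1 = 1" "norm q2 = 1" "q1 ^ d = q2 ^ d"
    "\<forall>A\<in>N. q1 \<notin> A \<and> q2 \<notin> A \<and> convex hull {q1, q2} \<inter> convex hull A = {}"
proof -
  have "finite (\<Union>N)" using N(1) by (auto simp: nc_family_def circle_block_def)
  then obtain w where "norm w = 1" "\<forall>z\<in>\<Union>N. z ^ d \<noteq> w ^ d"
    by (rule exists_generic_circle_point[OF d])
  then have w: "norm w = 1" "\<forall>A\<in>N. \<forall>z\<in>A. z ^ d \<noteq> w ^ d" by auto
  note labels = generic_power_fiber_labels[OF d N w]
  have "\<not> inj_on (circle_label N) (power_fiber d w)"
    using card_image labels(1) card_power_fiber[OF w(1) d] less by fastforce
  then obtain q1 q2 where q: "q1 \<in> power_fiber d w" "q2 \<in> power_fiber d w" "q1 \<noteq> q2"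
    "circle_label N q1 = circle_label N q2"
    unfolding inj_on_def by blast
  have "convex hull {q1, q2} \<inter> convex hull A = {}" if A: "A \<in> N" for A
  proof -
    have "q1 \<in> cap A (circle_label N q1 A)" "q2 \<in> cap A (circle_label N q1 A)"
      using circle_label(2)[OF N(1)] labels(2) q A by metis+
    then have "convex hull {q1, q2} \<subseteq> cap A (circle_label N q1 A)"
      by (intro hull_minimal) (auto simp: convex_cap)
    moreover have "circle_label N q1 A \<in> A" using circle_label(1)[OF N(1)] labels(2) q(1) A by blast
    ultimately show ?thesis using convex_hull_cap_disjoint[OF nc_familyD(2)[OF N(1) A]] by blast
  qed
  moreover have "q1 ^ d = q2 ^ d" using q by (simp add: power_fiber_def)
  ultimately show ?thesis using that q(3) labels(2) q(1,2) by blast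
qed

section \<open>Rank and refinement\<close>

lemma
  assumes P: "partition_on T P" and T: "finite T"
  shows card_partition_le: "card P \<le> card T"
    and sum_card_minus_one_partition: "(\<Sum>A\<in>P. card A - 1) = card T - card P"
proof -
  have fin: "finite P" "\<And>A. A \<in> P \<Longrightarrow> finite A"
    using finite_elements[OF T P] partition_onD1[OF P] T by (metis Union_upper finite_subset)+
  have one: "1 \<le> card A" if "A \<in> P" for A
    using fin(2)[OF that] partition_onD3[OF P] that by (auto simp: Suc_le_eq card_gt_0_iff)
  have T_eq: "card T = (\<Sum>A\<in>P. card A)"
    using card_Union_disjoint[OF partition_onD2[OF P] fin(2)] partition_onD1[OF P] by simp
  also have "\<dots> = (\<Sum>A\<in>P. (card A - 1) + 1)" using one by (intro sum.cong refl) (metis le_add_diff_inverse2)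
  finally have "card T = (\<Sum>A\<in>P. card A - 1) + card P" unfolding sum.distrib by simp
  then show "card P \<le> card T" "(\<Sum>A\<in>P. card A - 1) = card T - card P" by simp_all
qed

lemma rk_eq_sum_over_coarser_blocks:
  assumes ref: "Disjoint_Sets.refines S P Q"
    and fin: "\<And>B. B \<in> Q \<Longrightarrow> finite B" "finite (nonsingleton_blocks Q)"
  shows "rk P = (\<Sum>B\<in>nonsingleton_blocks Q. card B - card {A \<in> P. A \<subseteq> B})"
proof -
  define PB where "PB B = {A \<in> P. A \<subseteq> B}" for B
  have PB: "partition_on B (PB B)" if "B \<in> Q" for B
    using refines_obtains_subset[OF ref that] by (simp add: PB_def)
  have up: "\<exists>B\<in>Q. A \<subseteq> B" if "A \<in> P" for A
    using ref that by (auto simp: Disjoint_Sets.refines_def)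
  have Q_disj: "B = B'" if "B \<in> Q" "B' \<in> Q" "x \<in> B" "x \<in> B'" for B B' x
    using partition_onD2[of S Q] ref that unfolding Disjoint_Sets.refines_def disjoint_def by blast
  have P_ne: "A \<noteq> {}" if "A \<in> P" for A
    using ref that partition_onD3 by (fastforce simp: Disjoint_Sets.refines_def)
  have finPB: "finite (PB B)" if "B \<in> Q" for B
  proof -
    have "PB B \<subseteq> Pow B" by (auto simp: PB_def)
    then show ?thesis using fin(1)[OF that] by (meson finite_Pow_iff finite_subset)
  qed
  have NP: "nonsingleton_blocks P \<subseteq> (\<Union>B\<in>nonsingleton_blocks Q. PB B)"
  proof
    fix A assume A: "A \<in> nonsingleton_blocks P"
    then obtain B where B: "B \<in> Q" "A \<subseteq> B" using up by (auto simp: nonsingleton_blocks_def)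
    then have "finite A" using fin(1) finite_subset by blast
    moreover have "A \<in> P" "card A \<noteq> 1"
      using A by (auto simp: nonsingleton_blocks_def is_singleton_altdef)
    ultimately have "card A \<ge> 2" using P_ne[of A] by (cases "card A") auto
    moreover have "card A \<le> card B" using B fin(1) by (intro card_mono) auto
    ultimately have "B \<in> nonsingleton_blocks Q"
      using B by (auto simp: nonsingleton_blocks_def is_singleton_altdef)
    then show "A \<in> (\<Union>B\<in>nonsingleton_blocks Q. PB B)" using A B by (auto simp: PB_def nonsingleton_blocks_def)
  qed
  have "rk P = (\<Sum>A\<in>(\<Union>B\<in>nonsingleton_blocks Q. PB B). card A - 1)"
    unfolding rk_def
  proof (rule sum.mono_neutral_left[OF _ NP])
    show "finite (\<Union>B\<in>nonsingleton_blocks Q. PB B)"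
      using fin(2) finPB by (auto simp: nonsingleton_blocks_def)
    show "\<forall>A\<in>(\<Union>B\<in>nonsingleton_blocks Q. PB B) - nonsingleton_blocks P. card A - 1 = 0"
      by (auto simp: PB_def nonsingleton_blocks_def is_singleton_altdef)
  qed
  also have "\<dots> = (\<Sum>B\<in>nonsingleton_blocks Q. \<Sum>A\<in>PB B. card A - 1)"
  proof (rule sum.UNION_disjoint[OF fin(2)])
    show "\<forall>B\<in>nonsingleton_blocks Q. finite (PB B)" using finPB by (auto simp: nonsingleton_blocks_def)
    show "\<forall>B\<in>nonsingleton_blocks Q. \<forall>B'\<in>nonsingleton_blocks Q. B \<noteq> B' \<longrightarrow> PB B \<inter> PB B' = {}"
      using P_ne Q_disj by (fastforce simp: PB_def nonsingleton_blocks_def)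
  qed
  also have "\<dots> = (\<Sum>B\<in>nonsingleton_blocks Q. card B - card (PB B))"
    using sum_card_minus_one_partition[OF PB fin(1)] by (intro sum.cong) (auto simp: nonsingleton_blocks_def)
  finally show ?thesis by (simp add: PB_def)
qed

lemma rk_less_of_refines:
  assumes ref: "Disjoint_Sets.refines S P Q" and ne: "P \<noteq> Q"
    and fin: "\<And>B. B \<in> Q \<Longrightarrow> finite B" "finite (nonsingleton_blocks Q)"
  shows "rk P < rk Q"
proof -
  define PB where "PB B = {A \<in> P. A \<subseteq> B}" for B
  have PB: "partition_on B (PB B)" if "B \<in> Q" for B
    using refines_obtains_subset[OF ref that] by (simp add: PB_def)
  have card_PB: "1 \<le> card (PB B)" "card (PB B) \<le> card B" if B: "B \<in> Q" for B
  proof -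
    have "finite (PB B)" using finite_elements[OF fin(1)[OF B] PB[OF B]] .
    moreover have "B \<noteq> {}" using ref B unfolding Disjoint_Sets.refines_def partition_on_def by blast
    then have "PB B \<noteq> {}" using partition_onD1[OF PB[OF B]] by auto
    ultimately show "1 \<le> card (PB B)" by (simp add: Suc_le_eq card_gt_0_iff)
    show "card (PB B) \<le> card B" using card_partition_le[OF PB[OF B] fin(1)[OF B]] .
  qed
  have "\<not> Q \<subseteq> P"
  proof
    assume "Q \<subseteq> P"
    then have "Disjoint_Sets.refines S Q P" using ref by (auto simp: Disjoint_Sets.refines_def)
    then show False using refines_asym[OF ref] ne by blast
  qed
  then obtain B0 where B0: "B0 \<in> Q" "B0 \<notin> P" by blast
  have "card (PB B0) \<noteq> 1"
  proof
    assume "card (PB B0) = 1"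
    then obtain A where "PB B0 = {A}" by (auto simp: card_Suc_eq)
    then show False using partition_onD1[OF PB[OF B0(1)]] B0(2) by (auto simp: PB_def)
  qed
  then have two: "2 \<le> card (PB B0)" using card_PB[OF B0(1)] by simp
  then have B0N: "B0 \<in> nonsingleton_blocks Q"
    using card_PB(2)[OF B0(1)] B0(1) by (auto simp: nonsingleton_blocks_def is_singleton_altdef)
  have "(\<Sum>B\<in>nonsingleton_blocks Q. card B - card (PB B)) < (\<Sum>B\<in>nonsingleton_blocks Q. card B - 1)"
  proof (rule sum_strict_mono_ex1[OF fin(2)])
    show "\<forall>B\<in>nonsingleton_blocks Q. card B - card (PB B) \<le> card B - 1"
      using card_PB by (auto simp: nonsingleton_blocks_def intro: diff_le_mono2)
    show "\<exists>B\<in>nonsingleton_blocks Q. card B - card (PB B) < card B - 1"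
      using B0N two card_PB(2)[OF B0(1)] by force
  qed
  then show ?thesis using rk_eq_sum_over_coarser_blocks[OF ref fin] by (simp add: rk_def PB_def)
qed

section \<open>Noncrossing degree-\<open>d\<close> partitions of the circle\<close>

lemma NC_D:
  assumes "P \<in> NC d"
  shows "partition_on (sphere 0 1) P" "noncrossing P" "degree_partition d P"
  using assms by (auto simp: NC_def unit_circle_def)

lemma NC_block_finite:
  assumes d: "d \<ge> 1" and P: "P \<in> NC d" and A: "A \<in> P"
  shows "finite A"
proof (cases "A = {}")
  case False
  then obtain z where z: "z \<in> A" by blast
  have "w ^ d = z ^ d" if "w \<in> A" for w
    using NC_D(3)[OF P] A z that unfolding degree_partition_def by blast
  then have "A \<subseteq> power_fiber d z" by (auto simp: power_fiber_def)
  then show ?thesis using finite_power_fiber[OF d] finite_subset by blast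
qed simp

lemma NC_nc_family:
  assumes d: "d \<ge> 1" and P: "P \<in> NC d" and N: "N \<subseteq> nonsingleton_blocks P" "finite N"
  shows "nc_family N" "degree_partition d N"
proof -
  have NP: "N \<subseteq> P" using N by (auto simp: nonsingleton_blocks_def)
  have "circle_block A" if A: "A \<in> N" for A
  proof -
    have "finite A" "A \<noteq> {}" "\<not> is_singleton A" "A \<subseteq> sphere 0 1"
      using NC_block_finite[OF d P] partition_onD1[OF NC_D(1)[OF P]] partition_onD3[OF NC_D(1)[OF P]]
        A N NP by (auto simp: nonsingleton_blocks_def)
    then show ?thesis by (cases "card A") (auto simp: circle_block_def is_singleton_altdef)
  qed
  then show "nc_family N" using N(2) NC_D(2)[OF P] NP by (auto simp: nc_family_def noncrossing_def)
  show "degree_partition d N" using NC_D(3)[OF P] NP by (auto simp: degree_partition_def)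
qed

text \<open>Every nonsingleton block adds at least one cell, and there are at most \<open>d\<close> cells.\<close>

lemma NC_finite_nonsingleton_blocks:
  assumes d: "d \<ge> 1" and P: "P \<in> NC d"
  shows "finite (nonsingleton_blocks P)"
proof (rule ccontr)
  assume "infinite (nonsingleton_blocks P)"
  then obtain N where N: "finite N" "card N = d" "N \<subseteq> nonsingleton_blocks P"
    using infinite_arbitrarily_large by blast
  note N' = NC_nc_family[OF d P N(3,1)]
  have "(\<Sum>A\<in>N. 1) \<le> (\<Sum>A\<in>N. card A - 1)"
    using nc_familyD(2)[OF N'(1)] by (intro sum_mono) (fastforce simp: circle_block_def)
  then show False using card_cell_labels[OF N'(1)] card_cell_labels_le[OF d N'] N(2) by simp
qed

lemma regions_eq_components_disk_complement:
  assumes P: "partition_on (sphere 0 1) P"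
  shows "regions P = components (disk_complement (nonsingleton_blocks P))"
proof -
  have "cball 0 1 - (\<Union>A\<in>P. convex hull A) = disk_complement (nonsingleton_blocks P)"
  proof (intro set_eqI iffI)
    fix y assume y: "y \<in> cball 0 1 - (\<Union>A\<in>P. convex hull A)"
    have "y \<notin> sphere 0 1" using y partition_onD1[OF P] hull_inc by fastforce
    then show "y \<in> disk_complement (nonsingleton_blocks P)"
      using y by (auto simp: disk_complement_def nonsingleton_blocks_def)
  next
    fix y assume y: "y \<in> disk_complement (nonsingleton_blocks P)"
    have "y \<notin> convex hull A" if A: "A \<in> P" for A
    proof (cases "is_singleton A")
      case True
      then obtain z where "A = {z}" by (auto simp: is_singleton_def)
      moreover have "norm z = 1" using partition_onD1[OF P] A calculation by auto
      ultimately show ?thesis using y by (auto simp: disk_complement_def)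
    qed (use y A in \<open>auto simp: disk_complement_def nonsingleton_blocks_def\<close>)
    then show "y \<in> cball 0 1 - (\<Union>A\<in>P. convex hull A)" using y by (auto simp: disk_complement_def)
  qed
  then show ?thesis unfolding regions_def by simp
qed

lemma NC_regions:
  assumes d: "d \<ge> 1" and P: "P \<in> NC d"
  shows "finite (regions P)" "card (regions P) = rk P + 1" "card (regions P) \<le> d"
proof -
  define N where "N = nonsingleton_blocks P"
  have N: "nc_family N" "degree_partition d N"
    using NC_nc_family[OF d P _ NC_finite_nonsingleton_blocks[OF d P]] unfolding N_def by auto
  have regions: "regions P = cell N ` cell_labels N"
    using regions_eq_components_disk_complement[OF NC_D(1)[OF P]] components_disk_complement[OF N(1)]
    unfolding N_def by simp
  show "finite (regions P)" unfolding regions using finite_cell_labels[OF N(1)] by simp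
  have "card (regions P) = card (cell_labels N)"
    using regions_eq_components_disk_complement[OF NC_D(1)[OF P]] card_components_disk_complement[OF N(1)]
    unfolding N_def by simp
  then show "card (regions P) = rk P + 1" "card (regions P) \<le> d"
    using card_cell_labels[OF N(1)] card_cell_labels_le[OF d N] by (simp_all add: rk_def N_def)
qed

lemma NC_rk_less:
  assumes d: "d \<ge> 1" and P: "P \<in> NC d" and Q: "Q \<in> NC d" and "refines P Q" "Q \<noteq> P"
  shows "rk P < rk Q"
proof (rule rk_less_of_refines)
  show "Disjoint_Sets.refines (sphere 0 1) P Q"
    using NC_D(1)[OF P] NC_D(1)[OF Q] assms(4) by (simp add: Disjoint_Sets.refines_def Defs.refines_def)
qed (use assms NC_block_finite[OF d Q] NC_finite_nonsingleton_blocks[OF d Q] in auto)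

lemma unit_circle_in_closed_segment:
  fixes q1 q2 z :: complex
  assumes "norm q1 = 1" "norm q2 = 1" "norm z = 1" "z \<in> closed_segment q1 q2"
  shows "z = q1 \<or> z = q2"
proof -
  obtain u where u: "0 \<le> u" "u \<le> 1" "z = (1-u) *\<^sub>R q1 + u *\<^sub>R q2"
    using assms(4) unfolding closed_segment_def by blast
  show ?thesis
  proof (cases "u = 0 \<or> u = 1")
    case False
    then have u01: "0 < u" "u < 1" using u by auto
    have "norm ((1-u) *\<^sub>R q1 + u *\<^sub>R q2) = norm ((1-u) *\<^sub>R q1) + norm (u *\<^sub>R q2)"
      using assms u01 u(3) by simp
    then have "(1-u) *\<^sub>R (u *\<^sub>R q2) = u *\<^sub>R ((1-u) *\<^sub>R q1)"
      using norm_triangle_eq[THEN iffD1] assms u01 by fastforce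
    then have "((1-u) * u) *\<^sub>R q2 = ((1-u) * u) *\<^sub>R q1" by (simp add: mult.commute)
    then have "q2 = q1" using u01 by simp
    then show ?thesis using u(3) by (simp add: scaleR_left_distrib[symmetric])
  qed (use u in auto)
qed

lemma partition_on_merge_singletons:
  assumes P: "partition_on S P" and q: "{q1} \<in> P" "{q2} \<in> P"
  shows "partition_on S (insert {q1, q2} (P - {{q1}, {q2}}))"
proof -
  have old: "X \<inter> {q1, q2} = {}" if "X \<in> P" "X \<notin> {{q1}, {q2}}" for X
  proof -
    have "X \<inter> {q1} = {}" "X \<inter> {q2} = {}"
      using disjointD[OF partition_onD2[OF P] that(1)] that(2) q by auto
    then show ?thesis by blast
  qed
  show ?thesis
  proof (rule partition_onI)
    show "\<Union>(insert {q1, q2} (P - {{q1}, {q2}})) = S"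
      using partition_onD1[OF P] q by blast
    show "disjnt X Y" if XY: "X \<in> insert {q1, q2} (P - {{q1}, {q2}})"
      "Y \<in> insert {q1, q2} (P - {{q1}, {q2}})" "X \<noteq> Y" for X Y
    proof -
      consider "X = {q1, q2}" "Y \<in> P" "Y \<notin> {{q1}, {q2}}" | "Y = {q1, q2}" "X \<in> P" "X \<notin> {{q1}, {q2}}"
        | "X \<in> P" "Y \<in> P"
        using XY by blast
      then have "X \<inter> Y = {}"
      proof cases
        case 1
        then show ?thesis using old[OF 1(2,3)] by (simp add: Int_commute)
      next
        case 2
        then show ?thesis using old[OF 2(2,3)] by simp
      next
        case 3
        then show ?thesis using disjointD[OF partition_onD2[OF P] 3 XY(3)] by simp
      qed
      then show ?thesis by (simp add: disjnt_def)
    qed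
    show "{} \<notin> insert {q1, q2} (P - {{q1}, {q2}})" using partition_onD3[OF P] by blast
  qed
qed

lemma merge_singletons_coarsens:
  assumes P: "disjoint P" and q: "{q1} \<in> P" "{q2} \<in> P" "q1 \<noteq> q2"
  shows "refines P (insert {q1, q2} (P - {{q1}, {q2}}))" "insert {q1, q2} (P - {{q1}, {q2}}) \<noteq> P"
proof -
  show "refines P (insert {q1, q2} (P - {{q1}, {q2}}))"
    unfolding Defs.refines_def
  proof
    fix A assume "A \<in> P"
    then consider "A = {q1}" | "A = {q2}" | "A \<in> P - {{q1}, {q2}}" by blast
    then show "\<exists>B\<in>insert {q1, q2} (P - {{q1}, {q2}}). A \<subseteq> B" by cases auto
  qed
  have "{q1, q2} \<notin> P"
  proof
    assume "{q1, q2} \<in> P"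
    then have "{q1, q2} \<inter> {q1} = {}" using disjointD[OF P _ q(1)] q(3) by auto
    then show False by simp
  qed
  then show "insert {q1, q2} (P - {{q1}, {q2}}) \<noteq> P" by blast
qed

lemma NC_merge_singletons:
  assumes P: "P \<in> NC d" and q: "{q1} \<in> P" "{q2} \<in> P" "q1 \<noteq> q2" "q1 ^ d = q2 ^ d"
    and chord: "\<forall>A\<in>nonsingleton_blocks P. convex hull {q1, q2} \<inter> convex hull A = {}"
  shows "insert {q1, q2} (P - {{q1}, {q2}}) \<in> NC d"
proof -
  define Q where "Q = insert {q1, q2} (P - {{q1}, {q2}})"
  have pQ: "partition_on (sphere 0 1) Q"
    unfolding Q_def using partition_on_merge_singletons[OF NC_D(1)[OF P] q(1,2)] .
  have norm_q: "norm q1 = 1" "norm q2 = 1" using partition_onD1[OF NC_D(1)[OF P]] q by auto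
  have "convex hull {q1, q2} \<inter> convex hull X = {}" if X: "X \<in> P" "X \<notin> {{q1}, {q2}}" for X
  proof (cases "is_singleton X")
    case True
    then obtain z where z: "X = {z}" by (auto simp: is_singleton_def)
    then have "norm z = 1" "z \<noteq> q1" "z \<noteq> q2" using partition_onD1[OF NC_D(1)[OF P]] X by auto
    then have "z \<notin> convex hull {q1, q2}"
      using unit_circle_in_closed_segment[OF norm_q] by (auto simp: segment_convex_hull[symmetric])
    then show ?thesis using z by simp
  qed (use chord X in \<open>auto simp: nonsingleton_blocks_def\<close>)
  then have "noncrossing Q"
    using NC_D(2)[OF P] unfolding noncrossing_def Q_def by (metis (no_types, lifting) Diff_iff inf_commute insert_iff)
  moreover have "degree_partition d Q"
    using NC_D(3)[OF P] q(4) unfolding degree_partition_def Q_def by auto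
  ultimately show ?thesis using pQ by (simp add: NC_def unit_circle_def Q_def)
qed

lemma NC_coarsening_if_few_regions:
  assumes d: "d \<ge> 1" and P: "P \<in> NC d" and less: "card (regions P) < d"
  obtains Q where "Q \<in> NC d" "refines P Q" "Q \<noteq> P"
proof -
  define N where "N = nonsingleton_blocks P"
  have N: "nc_family N" "degree_partition d N"
    using NC_nc_family[OF d P _ NC_finite_nonsingleton_blocks[OF d P]] unfolding N_def by auto
  have "card (cell_labels N) < d"
    using less regions_eq_components_disk_complement[OF NC_D(1)[OF P]]
      card_components_disk_complement[OF N(1)] unfolding N_def by simp
  then obtain q1 q2 where q: "q1 \<noteq> q2" "norm q1 = 1" "norm q2 = 1" "q1 ^ d = q2 ^ d"
    and off: "\<forall>A\<in>N. q1 \<notin> A \<and> q2 \<notin> A \<and> convex hull {q1, q2} \<inter> convex hull A = {}"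
    using exists_chord_avoiding_blocks[OF d N] by blast
  have singleton: "{q} \<in> P" if q: "norm q = 1" "\<forall>A\<in>N. q \<notin> A" for q
  proof -
    have "q \<in> sphere 0 1" using q(1) by simp
    then have "q \<in> \<Union>P" using partition_onD1[OF NC_D(1)[OF P]] by blast
    then obtain A where A: "A \<in> P" "q \<in> A" by blast
    then have "is_singleton A" using q(2) by (auto simp: N_def nonsingleton_blocks_def)
    then show ?thesis using A by (metis is_singleton_the_elem singletonD)
  qed
  have s: "{q1} \<in> P" "{q2} \<in> P" using singleton q off by auto
  show ?thesis
    using that NC_merge_singletons[OF P s q(1,4)] off
      merge_singletons_coarsens[OF partition_onD2[OF NC_D(1)[OF P]] s q(1)]
    by (simp add: N_def)
qed

theorem lemma6p10:
  fixes d :: nat and P :: "complex set set"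
  assumes "d \<ge> 1" and "P \<in> NC d"
  shows "finite (nonsingleton_blocks P) \<and> finite (regions P)
         \<and> card (regions P) = rk P + 1
         \<and> (maximal_NC d P \<longleftrightarrow> card (regions P) = d)"
proof (intro conjI)
  note d = assms(1) and P = assms(2)
  show "finite (nonsingleton_blocks P)" by (rule NC_finite_nonsingleton_blocks[OF d P])
  show "finite (regions P)" "card (regions P) = rk P + 1" using NC_regions[OF d P] by auto
  show "maximal_NC d P \<longleftrightarrow> card (regions P) = d"
  proof
    assume "maximal_NC d P"
    then show "card (regions P) = d"
      using NC_regions(3)[OF d P] NC_coarsening_if_few_regions[OF d P]
      unfolding maximal_NC_def by (metis le_neq_implies_less)
  next
    assume "card (regions P) = d"
    then have "\<not> (Q \<in> NC d \<and> refines P Q \<and> Q \<noteq> P)" for Q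
      using NC_rk_less[OF d P, of Q] NC_regions(2,3)[OF d P] NC_regions(2,3)[OF d, of Q] by force
    then show "maximal_NC d P" using P unfolding maximal_NC_def by blast
  qed
qed

end
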